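(* Let $\Lambda$ be a cohomology algebra of $b^+=1$ type. Then the subgroup $I_T\subseteq\Lambda^2$ generated by all products $xy$ with $x,y\in\Lambda^1$ has rank at most $1$, and $\tilde b_1(\Lambda)$ is even.
   Context: A cohomology algebra is a graded, commutative, associative algebra $\Lambda=\bigoplus_{i=0}^4\Lambda^i$ over $\Lambda^0=\mathbb{Z}$, each $\Lambda^i$ free abelian of finite rank $b_i(\Lambda)$, with an isomorphism $p:\Lambda^4\cong\mathbb{Z}$ such that each product pairing $\Lambda^i\times\Lambda^{4-i}\to\mathbb{Z}$ is perfect. $\Gamma(x,y)=p(xy)$ on $\Lambda^2$ is a unimodular symmetric form; $b^+=1$ type means $\Gamma$ has exactly one positive eigenvalue. $\ker T=\{x\in\Lambda^1: xy=0\ \forall y\in\Lambda^1\}$ and $\tilde b_1(\Lambda)=b_1(\Lambda)-\mathrm{rank}\ker T$ (the rank of the skew-symmetric product pairing $T:\Lambda^1\times\Lambda^1\to\Lambda^2$). *)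

theory Defs
  imports "Jordan_Normal_Form.Char_Poly"
begin

text \<open>The degree-i part Lambda^i, a free abelian group of
 rank b i, is represented as Z^(b i): integer vectors nat => int vanishing from index b i on.
 The product of a degree-i and a degree-j element is given by m i j.\<close>

definition deg_part :: "(nat \<Rightarrow> nat) \<Rightarrow> nat \<Rightarrow> (nat \<Rightarrow> int) set" where
  "deg_part b i = {v. \<forall>k\<ge>b i. v k = 0}"

definition vadd :: "(nat \<Rightarrow> int) \<Rightarrow> (nat \<Rightarrow> int) \<Rightarrow> (nat \<Rightarrow> int)" where
  "vadd x y = (\<lambda>k. x k + y k)"

definition vsmult :: "int \<Rightarrow> (nat \<Rightarrow> int) \<Rightarrow> (nat \<Rightarrow> int)" where
  "vsmult c x = (\<lambda>k. c * x k)"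

definition vzero :: "nat \<Rightarrow> int" where
  "vzero = (\<lambda>k. 0)"

definition unit_vec :: "nat \<Rightarrow> int" where
  "unit_vec = (\<lambda>k. if k = 0 then 1 else 0)"

definition additive_on :: "(nat \<Rightarrow> int) set \<Rightarrow> ((nat \<Rightarrow> int) \<Rightarrow> int) \<Rightarrow> bool" where
  "additive_on A f = (\<forall>x\<in>A. \<forall>y\<in>A. f (vadd x y) = f x + f y)"

definition cohomology_algebra ::
  "(nat \<Rightarrow> nat) \<Rightarrow> (nat \<Rightarrow> nat \<Rightarrow> (nat \<Rightarrow> int) \<Rightarrow> (nat \<Rightarrow> int) \<Rightarrow> (nat \<Rightarrow> int))
    \<Rightarrow> ((nat \<Rightarrow> int) \<Rightarrow> int) \<Rightarrow> bool" where
  "cohomology_algebra b m p \<longleftrightarrow>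
     b 0 = 1
   \<comment> \<open>products land in the right degree\<close>
   \<and> (\<forall>i j x y. i + j \<le> 4 \<longrightarrow> x \<in> deg_part b i \<longrightarrow> y \<in> deg_part b j \<longrightarrow>
        m i j x y \<in> deg_part b (i + j))
   \<comment> \<open>bilinearity\<close>
   \<and> (\<forall>i j x x' y. i + j \<le> 4 \<longrightarrow> x \<in> deg_part b i \<longrightarrow> x' \<in> deg_part b i \<longrightarrow> y \<in> deg_part b j \<longrightarrow>
        m i j (vadd x x') y = vadd (m i j x y) (m i j x' y))
   \<and> (\<forall>i j x y y'. i + j \<le> 4 \<longrightarrow> x \<in> deg_part b i \<longrightarrow> y \<in> deg_part b j \<longrightarrow> y' \<in> deg_part b j \<longrightarrow>
        m i j x (vadd y y') = vadd (m i j x y) (m i j x y'))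
   \<comment> \<open>associativity\<close>
   \<and> (\<forall>i j k x y z. i + j + k \<le> 4 \<longrightarrow> x \<in> deg_part b i \<longrightarrow> y \<in> deg_part b j \<longrightarrow> z \<in> deg_part b k \<longrightarrow>
        m (i + j) k (m i j x y) z = m i (j + k) x (m j k y z))
   \<comment> \<open>graded commutativity\<close>
   \<and> (\<forall>i j x y. i + j \<le> 4 \<longrightarrow> x \<in> deg_part b i \<longrightarrow> y \<in> deg_part b j \<longrightarrow>
        m i j x y = vsmult ((-1) ^ (i * j)) (m j i y x))
   \<comment> \<open>unit of Lambda^0 = Z\<close>
   \<and> (\<forall>j x. j \<le> 4 \<longrightarrow> x \<in> deg_part b j \<longrightarrow> m 0 j unit_vec x = x)
   \<comment> \<open>p : Lambda^4 = Z an isomorphism\<close>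
   \<and> additive_on (deg_part b 4) p
   \<and> bij_betw p (deg_part b 4) UNIV
   \<comment> \<open>perfect pairings Lambda^i x Lambda^(4-i) -> Z\<close>
   \<and> (\<forall>i\<le>4. \<forall>f. additive_on (deg_part b (4 - i)) f \<longrightarrow>
        (\<exists>!x. x \<in> deg_part b i \<and> (\<forall>y\<in>deg_part b (4 - i). p (m i (4 - i) x y) = f y)))"

definition Gamma_form where
  "Gamma_form m p x y = p (m 2 2 x y)"

definition std_basis :: "nat \<Rightarrow> nat \<Rightarrow> int" where
  "std_basis k = (\<lambda>l. if l = k then 1 else 0)"

definition Gamma_matrix :: "(nat \<Rightarrow> nat) \<Rightarrow> (nat \<Rightarrow> nat \<Rightarrow> (nat \<Rightarrow> int) \<Rightarrow> (nat \<Rightarrow> int) \<Rightarrow> (nat \<Rightarrow> int))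
    \<Rightarrow> ((nat \<Rightarrow> int) \<Rightarrow> int) \<Rightarrow> real mat" where
  "Gamma_matrix b m p = mat (b 2) (b 2)
     (\<lambda>(k, l). real_of_int (Gamma_form m p (std_basis k) (std_basis l)))"

definition num_pos_eigenvalues :: "real mat \<Rightarrow> nat" where
  "num_pos_eigenvalues A = (\<Sum>r\<in>{r. r > 0 \<and> eigenvalue A r}. order r (char_poly A))"

definition bplus_one_type where
  "bplus_one_type b m p \<longleftrightarrow> cohomology_algebra b m p \<and> num_pos_eigenvalues (Gamma_matrix b m p) = 1"

definition int_span :: "(nat \<Rightarrow> int) set \<Rightarrow> (nat \<Rightarrow> int) set" where
  "int_span S = {(\<lambda>k. \<Sum>s\<in>F. c s * s k) | F c. finite F \<and> F \<subseteq> S}"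

definition int_lin_indep :: "(nat \<Rightarrow> int) set \<Rightarrow> bool" where
  "int_lin_indep S \<longleftrightarrow> finite S \<and>
     (\<forall>c. (\<forall>k. (\<Sum>s\<in>S. c s * s k) = 0) \<longrightarrow> (\<forall>s\<in>S. c s = 0))"

definition zrank :: "(nat \<Rightarrow> int) set \<Rightarrow> nat" where
  "zrank H = (GREATEST n. \<exists>S. S \<subseteq> H \<and> int_lin_indep S \<and> card S = n)"

definition I_T where
  "I_T b m = int_span {m 1 1 x y | x y. x \<in> deg_part b 1 \<and> y \<in> deg_part b 1}"

definition ker_T where
  "ker_T b m = {x \<in> deg_part b 1. \<forall>y\<in>deg_part b 1. m 1 1 x y = vzero}"

definition b1_tilde where
  "b1_tilde b m = b 1 - zrank (ker_T b m)"

end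

theory Submission
  imports Defs "Jordan_Normal_Form.Schur_Decomposition"
    "HOL-Computational_Algebra.Fundamental_Theorem_Algebra" "HOL-Library.Function_Algebras"
begin

text \<open>For x, y, z, w in Lambda^1 the number p(xyzw) is alternating in its four arguments. If it
  were nonzero, xy + zw and xz - yw (with suitable signs) would span a plane on which Gamma is
  positive definite, which is impossible when Gamma has only one positive eigenvalue. So I_T is
  isotropic for Gamma; since Gamma is unimodular, two independent isotropic vectors would again
  span, together with their duals, a positive definite plane. Hence I_T has rank at most 1.
  Then one coordinate of Lambda^2 detects whether a product xy vanishes, so T is described by a
  single skew-symmetric integer matrix, ker T is its kernel, and b1 - rank(ker T) is the rank of
  that matrix, which is even: over the rationals one splits off hyperbolic pairs until the form
  vanishes.\<close>

section \<open>Real symmetric matrices\<close>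

definition quad_form :: "real mat \<Rightarrow> real vec \<Rightarrow> real" where
  "quad_form A x = (\<Sum>i<dim_row A. \<Sum>j<dim_row A. x$i * A$$(i,j) * x$j)"

lemma scalar_prod_mult_mat_vec_self:
  assumes A: "A \<in> carrier_mat n n" and x: "x \<in> carrier_vec n"
  shows "x \<bullet> (A *\<^sub>v x) = quad_form A x"
  using A x unfolding quad_form_def
  by (auto simp: scalar_prod_def sum_distrib_left atLeast0LessThan mult.assoc intro!: sum.cong)

lemma symmetric_mat_scalar_prod_swap:
  fixes A :: "'a :: comm_ring mat"
  assumes A: "A \<in> carrier_mat n n" and sym: "A\<^sup>T = A"
    and u: "u \<in> carrier_vec n" and v: "v \<in> carrier_vec n"
  shows "u \<bullet> (A *\<^sub>v v) = v \<bullet> (A *\<^sub>v u)"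
proof -
  have "u \<bullet> (A *\<^sub>v v) = (A\<^sup>T *\<^sub>v u) \<bullet> v" using transpose_vec_mult_scalar[OF A v u] by simp
  also have "\<dots> = v \<bullet> (A *\<^sub>v u)" unfolding sym by (rule comm_scalar_prod[of _ n], insert A u v, auto)
  finally show ?thesis .
qed

lemma hermitian_form_real_symmetric:
  fixes A :: "real mat" and v :: "complex vec"
  assumes A: "A \<in> carrier_mat n n" and sym: "A\<^sup>T = A" and v: "v \<in> carrier_vec n"
  shows "Im (\<Sum>i\<in>{0..<n}. cnj (v$i) * (map_mat complex_of_real A *\<^sub>v v)$i) = 0"
proof -
  define s where "s = (\<Sum>i\<in>{0..<n}. cnj (v$i) * (map_mat complex_of_real A *\<^sub>v v)$i)"
  have s_entries: "s = (\<Sum>i\<in>{0..<n}. \<Sum>j\<in>{0..<n}. cnj (v$i) * of_real (A$$(i,j)) * v$j)"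
    unfolding s_def using A v by (auto simp: scalar_prod_def sum_distrib_left mult.assoc intro!: sum.cong)
  have Asym: "A$$(i,j) = A$$(j,i)" if "i<n" "j<n" for i j
    using arg_cong[OF sym, of "\<lambda>B. B$$(j,i)"] that A by auto
  have "cnj s = (\<Sum>i\<in>{0..<n}. \<Sum>j\<in>{0..<n}. v$i * of_real (A$$(i,j)) * cnj (v$j))"
    unfolding s_entries by (simp add: cnj_sum)
  also have "\<dots> = (\<Sum>j\<in>{0..<n}. \<Sum>i\<in>{0..<n}. v$i * of_real (A$$(i,j)) * cnj (v$j))"
    by (rule sum.swap)
  also have "\<dots> = s" unfolding s_entries
    by (intro sum.cong refl, simp add: Asym mult.commute mult.left_commute)
  finally have cnj_s: "cnj s = s" .
  have "Im s = 0" using arg_cong[OF cnj_s, of Im] by simp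
  thus ?thesis unfolding s_def .
qed

text \<open>A complex eigenvalue z of A satisfies z |v|^2 = v^* A v, which is real.\<close>
lemma symmetric_real_mat_has_eigenvalue:
  fixes A :: "real mat"
  assumes A: "A \<in> carrier_mat n n" and sym: "A\<^sup>T = A" and n: "n > 0"
  shows "\<exists>l. eigenvalue A l"
proof -
  let ?Ac = "map_mat complex_of_real A"
  have Ac: "?Ac \<in> carrier_mat n n" using A by auto
  have cp: "char_poly ?Ac = map_poly of_real (char_poly A)"
    using of_real_hom.char_poly_hom[OF A] by simp
  have "degree (char_poly ?Ac) = n" using degree_monic_char_poly[OF Ac] by simp
  hence "\<not> constant (poly (char_poly ?Ac))" using n constant_degree[of "char_poly ?Ac"] by simp
  then obtain z where z: "poly (char_poly ?Ac) z = 0" using fundamental_theorem_of_algebra by blast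
  hence "eigenvalue ?Ac z" using eigenvalue_root_char_poly[OF Ac] by simp
  then obtain v where "eigenvector ?Ac v z" unfolding eigenvalue_def by blast
  hence v: "v \<in> carrier_vec n" and v0: "v \<noteq> 0\<^sub>v n" and Av: "?Ac *\<^sub>v v = z \<cdot>\<^sub>v v"
    using Ac unfolding eigenvector_def by auto
  define N where "N = (\<Sum>i\<in>{0..<n}. (cmod (v$i))^2)"
  have sq: "cnj (v$i) * (z * v$i) = z * of_real ((cmod (v$i))^2)" for i
    by (simp only: complex_norm_square) (simp add: mult.commute mult.left_commute)
  have "(\<Sum>i\<in>{0..<n}. cnj (v$i) * (?Ac *\<^sub>v v)$i) = z * of_real N"
    unfolding N_def Av of_real_sum sum_distrib_left using v by (auto simp: sq intro!: sum.cong)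
  hence real: "Im (z * of_real N) = 0" using hermitian_form_real_symmetric[OF A sym v] by simp
  obtain i where i: "i < n" "v$i \<noteq> 0"
    using v v0 by (metis carrier_vecD eq_vecI index_zero_vec(1) index_zero_vec(2))
  have "N > 0" unfolding N_def by (rule sum_pos2[of _ i]) (use i in auto)
  hence "Im z = 0" using real by simp
  then have zr: "z = of_real (Re z)" by (simp add: complex_eq_iff)
  have "poly (char_poly A) (Re z) = 0"
    using z unfolding cp by (subst (asm) zr) (simp add: of_real_hom.poly_map_poly)
  thus ?thesis using eigenvalue_root_char_poly[OF A] by blast
qed

lemma orthonormal_cols_mat:
  fixes us :: "real vec list"
  assumes len: "length us = n" and us: "set us \<subseteq> carrier_vec n"
    and orth: "\<And>i j. i < n \<Longrightarrow> j < n \<Longrightarrow> us!i \<bullet> us!j = (if i = j then 1 else 0)"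
  shows "mat_of_cols n us \<in> carrier_mat n n" and "(mat_of_cols n us)\<^sup>T * mat_of_cols n us = 1\<^sub>m n"
    and "mat_of_cols n us * (mat_of_cols n us)\<^sup>T = 1\<^sub>m n"
proof -
  let ?W = "mat_of_cols n us"
  show W: "?W \<in> carrier_mat n n" using len by auto
  have colW: "col ?W i = us ! i" if "i < n" for i
    using that len us by (intro col_mat_of_cols) auto
  show WTW: "?W\<^sup>T * ?W = 1\<^sub>m n"
  proof (rule eq_matI)
    fix i j assume ij: "i < dim_row (1\<^sub>m n)" "j < dim_col (1\<^sub>m n)"
    hence "(?W\<^sup>T * ?W) $$ (i,j) = col ?W i \<bullet> col ?W j" using W by auto
    also have "\<dots> = 1\<^sub>m n $$ (i,j)" using ij colW orth by auto
    finally show "(?W\<^sup>T * ?W) $$ (i,j) = 1\<^sub>m n $$ (i,j)" .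
  qed (use W in auto)
  show "?W * ?W\<^sup>T = 1\<^sub>m n"
    using mat_mult_left_right_inverse[OF _ W WTW] W by auto
qed

lemma orthonormal_completion:
  fixes v :: "real vec"
  assumes v: "v \<in> carrier_vec n" and v0: "v \<noteq> 0\<^sub>v n"
  shows "\<exists>W c. W \<in> carrier_mat n n \<and> W\<^sup>T * W = 1\<^sub>m n \<and> W * W\<^sup>T = 1\<^sub>m n \<and> col W 0 = c \<cdot>\<^sub>v v"
proof -
  have n: "n \<noteq> 0" using v v0 by (metis carrier_vecD eq_vecI index_zero_vec(2) less_nat_zero_code)
  interpret cof_vec_space n "TYPE(real)" .
  define b where "b = basis_completion v"
  define ws where "ws = gram_schmidt n b"
  from basis_completion[OF v v0, folded b_def]
  have dist_b: "distinct b" and indep: "\<not> lin_dep (set b)" and b: "set b \<subseteq> carrier_vec n"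
    and hdb: "hd b = v" and len_b: "length b = n" by auto
  from hdb len_b n obtain vs where bv: "b = v # vs" by (cases b, auto)
  from gram_schmidt_result[OF b dist_b indep refl, folded ws_def]
  have ws: "set ws \<subseteq> carrier_vec n" "corthogonal ws" "length ws = n"
    by (auto simp: len_b)
  from gram_schmidt_hd[OF v, of vs, folded bv] have hdws: "hd ws = v" unfolding ws_def .
  define us where "us = map (\<lambda>w. (1 / sqrt (w \<bullet> w)) \<cdot>\<^sub>v w) ws"
  have lus: "length us = n" and us: "set us \<subseteq> carrier_vec n" unfolding us_def using ws by auto
  have wsc: "i < n \<Longrightarrow> ws ! i \<in> carrier_vec n" for i using ws by auto
  have ws_orth: "ws!i \<bullet> ws!j = 0 \<longleftrightarrow> i \<noteq> j" if "i<n" "j<n" for i j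
    using ws(2) that ws(3) unfolding corthogonal_def
    by (auto simp: scalar_prod_def conjugate_vec_def)
  have self_nonneg: "w \<bullet> w \<ge> 0" for w :: "real vec"
    unfolding scalar_prod_def by (auto intro: sum_nonneg)
  have us_orth: "us!i \<bullet> us!j = (if i = j then 1 else 0)" if "i<n" "j<n" for i j
  proof -
    have "us!i \<bullet> us!j = (1 / sqrt (ws!i \<bullet> ws!i)) * (1 / sqrt (ws!j \<bullet> ws!j)) * (ws!i \<bullet> ws!j)"
      unfolding us_def using that ws wsc[OF that(1)] wsc[OF that(2)]
      by (simp add: smult_scalar_prod_distrib scalar_prod_smult_distrib)
    also have "\<dots> = (if i = j then 1 else 0)"
      using ws_orth[OF that] ws_orth[OF that(1) that(1)] self_nonneg[of "ws!i"]
      by (auto simp: field_simps)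
    finally show ?thesis .
  qed
  have "col (mat_of_cols n us) 0 = (1 / sqrt (v \<bullet> v)) \<cdot>\<^sub>v v"
    using col_mat_of_cols[of 0 us n] us n hdws ws(3) unfolding us_def by (cases ws, auto)
  thus ?thesis using orthonormal_cols_mat[OF lus us us_orth] by blast
qed

lemma four_block_mat_of_first_col:
  fixes A :: "real mat"
  assumes A: "A \<in> carrier_mat (Suc k) (Suc k)"
    and sym: "\<And>i j. i < Suc k \<Longrightarrow> j < Suc k \<Longrightarrow> A$$(i,j) = A$$(j,i)"
    and col0: "\<And>i. i < Suc k \<Longrightarrow> A$$(i,0) = (if i = 0 then l else 0)"
  shows "A = four_block_mat (mat 1 1 (\<lambda>_. l)) (0\<^sub>m 1 k) (0\<^sub>m k 1) (mat k k (\<lambda>(i,j). A$$(Suc i, Suc j)))"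
    (is "A = ?B")
proof (rule eq_matI)
  fix i j assume "i < dim_row ?B" "j < dim_col ?B"
  hence ij: "i < Suc k" "j < Suc k" by auto
  show "A$$(i,j) = ?B $$ (i,j)"
  proof (cases i)
    case 0
    thus ?thesis using ij col0[of j] sym[of i j] by (cases j) auto
  next
    case (Suc i')
    thus ?thesis using ij col0[of i] by (cases j) auto
  qed
qed (use A in auto)

text \<open>Complete a real eigenvector to an orthonormal basis.\<close>
lemma symmetric_mat_deflation:
  fixes A :: "real mat"
  assumes A: "A \<in> carrier_mat (Suc k) (Suc k)" and sym: "A\<^sup>T = A"
  obtains l W A3 where "W \<in> carrier_mat (Suc k) (Suc k)" "W\<^sup>T * W = 1\<^sub>m (Suc k)"
    "W * W\<^sup>T = 1\<^sub>m (Suc k)" "A3 \<in> carrier_mat k k" "A3\<^sup>T = A3"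
    "W\<^sup>T * A * W = four_block_mat (mat 1 1 (\<lambda>_. l)) (0\<^sub>m 1 k) (0\<^sub>m k 1) A3"
proof -
  let ?n = "Suc k"
  obtain l where "eigenvalue A l" using symmetric_real_mat_has_eigenvalue[OF A sym] by auto
  then obtain v where "eigenvector A v l" unfolding eigenvalue_def by auto
  hence v: "v \<in> carrier_vec ?n" and v0: "v \<noteq> 0\<^sub>v ?n" and Av: "A *\<^sub>v v = l \<cdot>\<^sub>v v"
    using A unfolding eigenvector_def by auto
  obtain W c where W: "W \<in> carrier_mat ?n ?n" and WTW: "W\<^sup>T * W = 1\<^sub>m ?n"
    and WWT: "W * W\<^sup>T = 1\<^sub>m ?n" and W0: "col W 0 = c \<cdot>\<^sub>v v"
    using orthonormal_completion[OF v v0] by blast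
  have colc: "col W i \<in> carrier_vec ?n" for i using W by (metis carrier_matD(1) carrier_vecI col_dim)
  define A' where "A' = W\<^sup>T * A * W"
  have A': "A' \<in> carrier_mat ?n ?n" unfolding A'_def using W A by auto
  have A'ij: "A'$$(i,j) = col W i \<bullet> (A *\<^sub>v col W j)" if "i < ?n" "j < ?n" for i j
  proof -
    have "A' = W\<^sup>T * (A * W)" unfolding A'_def using W A by (simp add: assoc_mult_mat[of _ ?n ?n _ ?n _ ?n])
    thus ?thesis using that W A by (auto simp: mult_mat_vec_def)
  qed
  have Aw0: "A *\<^sub>v col W 0 = l \<cdot>\<^sub>v col W 0"
    unfolding W0 using mult_mat_vec[OF A v] Av by (simp add: smult_smult_assoc mult.commute)
  have ortho: "col W i \<bullet> col W j = (if i = j then 1 else 0)" if "i < ?n" "j < ?n" for i j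
  proof -
    have "col W i \<bullet> col W j = (W\<^sup>T * W) $$ (i,j)" using that W by auto
    thus ?thesis unfolding WTW using that by auto
  qed
  have A'0: "A'$$(i,0) = (if i = 0 then l else 0)" if "i < ?n" for i
    using that A'ij[OF that] Aw0 ortho[OF that, of 0] scalar_prod_smult_distrib[OF colc colc]
    by auto
  have A'sym: "A'$$(i,j) = A'$$(j,i)" if "i < ?n" "j < ?n" for i j
    using A'ij that symmetric_mat_scalar_prod_swap[OF A sym colc colc] by simp
  define A3 where "A3 = mat k k (\<lambda>(i,j). A'$$(Suc i, Suc j))"
  have "A3 \<in> carrier_mat k k" "A3\<^sup>T = A3" unfolding A3_def by (auto intro!: eq_matI simp: A'sym)
  moreover have "A' = four_block_mat (mat 1 1 (\<lambda>_. l)) (0\<^sub>m 1 k) (0\<^sub>m k 1) A3"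
    unfolding A3_def using four_block_mat_of_first_col[OF A' A'sym A'0] .
  ultimately show ?thesis using that W WTW WWT unfolding A'_def by blast
qed

lemma quad_form_orthogonal_change:
  fixes A W :: "real mat"
  assumes A: "A \<in> carrier_mat n n" and W: "W \<in> carrier_mat n n" and WWT: "W * W\<^sup>T = 1\<^sub>m n"
    and x: "x \<in> carrier_vec n"
  shows "quad_form A x = quad_form (W\<^sup>T * A * W) (W\<^sup>T *\<^sub>v x)"
proof -
  have WT: "W\<^sup>T \<in> carrier_mat n n" using W by auto
  define y where "y = W\<^sup>T *\<^sub>v x"
  have y: "y \<in> carrier_vec n" unfolding y_def using WT x by auto
  have xy: "x = W *\<^sub>v y" unfolding y_def using W WT x
    by (simp add: assoc_mult_mat_vec[symmetric, of _ n n _ n] WWT)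
  define z where "z = A *\<^sub>v (W *\<^sub>v y)"
  have z: "z \<in> carrier_vec n" unfolding z_def using A W y by auto
  have "quad_form A x = (W *\<^sub>v y) \<bullet> z" unfolding z_def xy using scalar_prod_mult_mat_vec_self[OF A] W y by simp
  also have "\<dots> = z \<bullet> (W *\<^sub>v y)" by (rule comm_scalar_prod[of _ n]) (use W y z in auto)
  also have "\<dots> = (W\<^sup>T *\<^sub>v z) \<bullet> y" using transpose_vec_mult_scalar[OF W y z] by simp
  also have "\<dots> = y \<bullet> (W\<^sup>T *\<^sub>v z)" by (rule comm_scalar_prod[of _ n]) (use WT y z in auto)
  also have "W\<^sup>T *\<^sub>v z = (W\<^sup>T * A * W) *\<^sub>v y" unfolding z_def using W WT A y
    by (simp add: assoc_mult_mat_vec[of _ n n _ n])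
  also have "y \<bullet> \<dots> = quad_form (W\<^sup>T * A * W) y"
    by (rule scalar_prod_mult_mat_vec_self) (use W A y in auto)
  finally show ?thesis unfolding y_def .
qed

lemma quad_form_block_diag:
  fixes A3 :: "real mat"
  assumes A3: "A3 \<in> carrier_mat k k"
  shows "quad_form (four_block_mat (mat 1 1 (\<lambda>_. l)) (0\<^sub>m 1 k) (0\<^sub>m k 1) A3) y
    = l * (y$0)^2 + quad_form A3 (vec k (\<lambda>j. y$(Suc j)))"
proof -
  let ?B = "four_block_mat (mat 1 1 (\<lambda>_. l)) (0\<^sub>m 1 k) (0\<^sub>m k 1) A3"
  have B: "?B \<in> carrier_mat (Suc k) (Suc k)" using A3 by auto
  have "quad_form ?B y = (\<Sum>i<Suc k. \<Sum>j<Suc k. y$i * ?B$$(i,j) * y$j)"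
    unfolding quad_form_def carrier_matD(1)[OF B] ..
  also have "\<dots> = (\<Sum>j<Suc k. y$0 * ?B$$(0,j) * y$j) + (\<Sum>i<k. \<Sum>j<Suc k. y$(Suc i) * ?B$$(Suc i,j) * y$j)"
    by (rule sum.lessThan_Suc_shift)
  also have "(\<Sum>j<Suc k. y$0 * ?B$$(0,j) * y$j) = y$0 * l * y$0"
    by (subst sum.lessThan_Suc_shift) (use A3 in simp)
  also have "(\<Sum>i<k. \<Sum>j<Suc k. y$(Suc i) * ?B$$(Suc i,j) * y$j)
      = (\<Sum>i<k. \<Sum>j<k. y$(Suc i) * A3$$(i,j) * y$(Suc j))"
    by (rule sum.cong[OF refl], subst sum.lessThan_Suc_shift) (use A3 in simp)
  also have "\<dots> = quad_form A3 (vec k (\<lambda>j. y$(Suc j)))"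
    unfolding quad_form_def using A3 by simp
  finally show ?thesis by (simp add: power2_eq_square)
qed

definition linear_form :: "nat \<Rightarrow> (real vec \<Rightarrow> real) \<Rightarrow> bool" where
  "linear_form n g \<longleftrightarrow> (\<forall>x\<in>carrier_vec n. \<forall>y\<in>carrier_vec n. \<forall>a b.
     g (a \<cdot>\<^sub>v x + b \<cdot>\<^sub>v y) = a * g x + b * g y)"

lemma linear_form_coordinate: "i < n \<Longrightarrow> linear_form n (\<lambda>y. y$i)"
  unfolding linear_form_def by simp

lemma linear_form_tail:
  assumes "linear_form k g"
  shows "linear_form (Suc k) (\<lambda>y. g (vec k (\<lambda>j. y$(Suc j))))"
  unfolding linear_form_def
proof (intro ballI allI)
  fix x y :: "real vec" and a b :: real
  assume "x \<in> carrier_vec (Suc k)" "y \<in> carrier_vec (Suc k)"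
  hence "vec k (\<lambda>j. (a \<cdot>\<^sub>v x + b \<cdot>\<^sub>v y)$(Suc j))
      = a \<cdot>\<^sub>v vec k (\<lambda>j. x$(Suc j)) + b \<cdot>\<^sub>v vec k (\<lambda>j. y$(Suc j))"
    by (intro eq_vecI) auto
  thus "g (vec k (\<lambda>j. (a \<cdot>\<^sub>v x + b \<cdot>\<^sub>v y)$(Suc j)))
      = a * g (vec k (\<lambda>j. x$(Suc j))) + b * g (vec k (\<lambda>j. y$(Suc j)))"
    using assms unfolding linear_form_def by simp
qed

lemma linear_form_mult_mat_vec:
  assumes g: "linear_form n g" and M: "M \<in> carrier_mat n n"
  shows "linear_form n (\<lambda>x. g (M *\<^sub>v x))"
  unfolding linear_form_def
proof (intro ballI allI)
  fix x y :: "real vec" and a b :: real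
  assume x: "x \<in> carrier_vec n" and y: "y \<in> carrier_vec n"
  have "M *\<^sub>v (a \<cdot>\<^sub>v x + b \<cdot>\<^sub>v y) = a \<cdot>\<^sub>v (M *\<^sub>v x) + b \<cdot>\<^sub>v (M *\<^sub>v y)"
    using x y by (simp add: mult_add_distrib_mat_vec[OF M] mult_mat_vec[OF M])
  thus "g (M *\<^sub>v (a \<cdot>\<^sub>v x + b \<cdot>\<^sub>v y)) = a * g (M *\<^sub>v x) + b * g (M *\<^sub>v y)"
    using g M x y unfolding linear_form_def by simp
qed

lemma char_poly_orthogonal_conj:
  fixes A W :: "real mat"
  assumes A: "A \<in> carrier_mat n n" and W: "W \<in> carrier_mat n n"
    and WTW: "W\<^sup>T * W = 1\<^sub>m n" and WWT: "W * W\<^sup>T = 1\<^sub>m n"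
  shows "char_poly (W\<^sup>T * A * W) = char_poly A"
proof -
  have "similar_mat_wit (W\<^sup>T * A * W) A W\<^sup>T W"
    unfolding similar_mat_wit_def Let_def using A W WTW WWT
    by (auto simp: assoc_mult_mat[of _ n n _ n _ n])
  thus ?thesis using char_poly_similar unfolding similar_mat_def by metis
qed

lemma symmetric_mat_diagonal_form:
  fixes A :: "real mat"
  assumes "A \<in> carrier_mat n n" "A\<^sup>T = A"
  shows "\<exists>ds L. length ds = n \<and> char_poly A = (\<Prod>d\<leftarrow>ds. [:-d,1:]) \<and> (\<forall>i<n. linear_form n (L i)) \<and>
    (\<forall>x\<in>carrier_vec n. quad_form A x = (\<Sum>i<n. ds!i * (L i x)^2))"
  using assms
proof (induction n arbitrary: A)
  case 0
  hence A: "A \<in> carrier_mat 0 0" by simp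
  have "monic (char_poly A)" "degree (char_poly A) = 0" using degree_monic_char_poly[OF A] by auto
  hence "char_poly A = 1" using monic_degree_0 by blast
  moreover have "quad_form A x = 0" for x unfolding quad_form_def using A by simp
  ultimately show ?case by (intro exI[of _ "[]"] exI[of _ "\<lambda>i x. 0"]) auto
next
  case (Suc k A)
  have A: "A \<in> carrier_mat (Suc k) (Suc k)" using Suc by auto
  obtain l W A3 where W: "W \<in> carrier_mat (Suc k) (Suc k)" and WTW: "W\<^sup>T * W = 1\<^sub>m (Suc k)"
    and WWT: "W * W\<^sup>T = 1\<^sub>m (Suc k)" and A3: "A3 \<in> carrier_mat k k" "A3\<^sup>T = A3"
    and block: "W\<^sup>T * A * W = four_block_mat (mat 1 1 (\<lambda>_. l)) (0\<^sub>m 1 k) (0\<^sub>m k 1) A3"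
    using symmetric_mat_deflation[OF A] Suc.prems(2) by metis
  have WT: "W\<^sup>T \<in> carrier_mat (Suc k) (Suc k)" using W by auto
  from Suc.IH[OF A3] obtain ds3 L3 where ds3: "length ds3 = k"
    and cp3: "char_poly A3 = (\<Prod>d\<leftarrow>ds3. [:-d,1:])" and lin3: "\<forall>i<k. linear_form k (L3 i)"
    and qf3: "\<forall>x\<in>carrier_vec k. quad_form A3 x = (\<Sum>i<k. ds3!i * (L3 i x)^2)" by blast
  have "char_poly A = char_poly (W\<^sup>T * A * W)"
    using char_poly_orthogonal_conj[OF A W WTW WWT] by simp
  also have "\<dots> = char_poly (mat 1 1 (\<lambda>_. l)) * char_poly A3"
    unfolding block by (rule char_poly_four_block_zeros_col) (use A3 in auto)
  also have "char_poly (mat 1 1 (\<lambda>_. l)) = [:-l,1:]"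
    by (simp add: char_poly_defs det_def sign_def)
  finally have cpA: "char_poly A = (\<Prod>d\<leftarrow>l # ds3. [:-d,1:])" using cp3 by simp
  define L where "L = (\<lambda>i x. case i of 0 \<Rightarrow> (W\<^sup>T *\<^sub>v x)$0
    | Suc i' \<Rightarrow> L3 i' (vec k (\<lambda>j. (W\<^sup>T *\<^sub>v x)$(Suc j))))"
  have "linear_form (Suc k) (L i)" if "i < Suc k" for i
    using that lin3 linear_form_mult_mat_vec[OF linear_form_coordinate WT]
      linear_form_mult_mat_vec[OF linear_form_tail WT]
    unfolding L_def by (cases i) auto
  moreover have "quad_form A x = (\<Sum>i<Suc k. (l # ds3)!i * (L i x)^2)" if x: "x \<in> carrier_vec (Suc k)" for x
    unfolding quad_form_orthogonal_change[OF A W WWT x] block quad_form_block_diag[OF A3(1)]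
    using qf3 unfolding sum.lessThan_Suc_shift by (simp add: L_def)
  ultimately show ?case using ds3 cpA by (intro exI[of _ "l # ds3"] exI[of _ L]) auto
qed

lemma order_prod_list_linear:
  "Polynomial.order r (\<Prod>d\<leftarrow>ds. [:-d,1:]) = length (filter ((=) r) ds)"
proof (induction ds)
  case Nil thus ?case by (simp add: order_0I)
next
  case (Cons d ds)
  have "monic (\<Prod>e\<leftarrow>ds. [:- e, 1:])" by (rule monic_prod_list) auto
  hence "(\<Prod>e\<leftarrow>ds. [:- e, 1:]) \<noteq> 0" by auto
  hence "[:-d,1:] * (\<Prod>d\<leftarrow>ds. [:-d,1:]) \<noteq> 0" by (metis mult_eq_0_iff pCons_eq_0_iff one_neq_zero)
  from order_mult[OF this] show ?case using Cons by (simp add: order_linear')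
qed

lemma num_pos_eigenvalues_linear_factors:
  assumes A: "A \<in> carrier_mat n n" and cp: "char_poly A = (\<Prod>d\<leftarrow>ds. [:-d,1:])"
    and len: "length ds = n"
  shows "num_pos_eigenvalues A = card {i. i < n \<and> ds!i > 0}"
proof -
  define R where "R = {r. r > 0 \<and> r \<in> set ds}"
  have R: "{r. r > 0 \<and> eigenvalue A r} = R"
    unfolding R_def eigenvalue_root_char_poly[OF A] cp by (auto simp: poly_prod_list_zero_iff)
  have "num_pos_eigenvalues A = (\<Sum>r\<in>R. card {i. i < n \<and> ds!i = r})"
    unfolding num_pos_eigenvalues_def R cp order_prod_list_linear length_filter_conv_card len
    by (intro sum.cong refl) metis
  also have "\<dots> = card (\<Union>r\<in>R. {i. i < n \<and> ds!i = r})"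
    by (rule card_UN_disjoint[symmetric]) (auto simp: R_def)
  also have "(\<Union>r\<in>R. {i. i < n \<and> ds!i = r}) = {i. i < n \<and> ds!i > 0}"
    unfolding R_def using len by auto
  finally show ?thesis .
qed

lemma quad_form_lincomb:
  fixes A :: "real mat"
  assumes A: "A \<in> carrier_mat n n" and sym: "A\<^sup>T = A"
    and u: "u \<in> carrier_vec n" and v: "v \<in> carrier_vec n"
  shows "quad_form A (x \<cdot>\<^sub>v u + y \<cdot>\<^sub>v v)
    = x^2 * quad_form A u + 2 * x * y * (u \<bullet> (A *\<^sub>v v)) + y^2 * quad_form A v"
proof -
  have w: "x \<cdot>\<^sub>v u + y \<cdot>\<^sub>v v \<in> carrier_vec n" using u v by auto
  have Au: "A *\<^sub>v u \<in> carrier_vec n" "A *\<^sub>v v \<in> carrier_vec n" using A u v by auto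
  have "quad_form A (x \<cdot>\<^sub>v u + y \<cdot>\<^sub>v v) = (x \<cdot>\<^sub>v u + y \<cdot>\<^sub>v v) \<bullet> (A *\<^sub>v (x \<cdot>\<^sub>v u + y \<cdot>\<^sub>v v))"
    using scalar_prod_mult_mat_vec_self[OF A w] by simp
  also have "A *\<^sub>v (x \<cdot>\<^sub>v u + y \<cdot>\<^sub>v v) = x \<cdot>\<^sub>v (A *\<^sub>v u) + y \<cdot>\<^sub>v (A *\<^sub>v v)"
    using u v by (simp add: mult_add_distrib_mat_vec[OF A] mult_mat_vec[OF A])
  also have "(x \<cdot>\<^sub>v u + y \<cdot>\<^sub>v v) \<bullet> (x \<cdot>\<^sub>v (A *\<^sub>v u) + y \<cdot>\<^sub>v (A *\<^sub>v v))
      = x * x * (u \<bullet> (A *\<^sub>v u)) + x * y * (u \<bullet> (A *\<^sub>v v)) + y * x * (v \<bullet> (A *\<^sub>v u)) + y * y * (v \<bullet> (A *\<^sub>v v))"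
    using u v Au
    by (simp add: add_scalar_prod_distrib[of _ n] scalar_prod_add_distrib[of _ n]
        smult_scalar_prod_distrib[of _ n] scalar_prod_smult_distrib[of _ n] algebra_simps)
  finally show ?thesis
    using scalar_prod_mult_mat_vec_self[OF A] symmetric_mat_scalar_prod_swap[OF A sym u v] u v
    by (simp add: power2_eq_square algebra_simps)
qed

lemma binary_quadratic_pos:
  fixes a b c x y :: real
  assumes "a > 0" "a * c > b^2" "(x, y) \<noteq> (0, 0)"
  shows "x^2 * a + 2 * x * y * b + y^2 * c > 0"
proof (cases "y = 0")
  case True thus ?thesis using assms by simp
next
  case False
  have "a * (x^2 * a + 2 * x * y * b + y^2 * c) = (a*x + b*y)^2 + (a*c - b^2) * y^2"
    by (simp add: power2_eq_square algebra_simps)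
  moreover have "(a*c - b^2) * y^2 > 0" using assms False by simp
  ultimately have "a * (x^2 * a + 2 * x * y * b + y^2 * c) > 0" by (smt (verit) zero_le_power2)
  thus ?thesis using assms(1) by (simp add: zero_less_mult_iff)
qed

definition bilin_form :: "real mat \<Rightarrow> (nat \<Rightarrow> real) \<Rightarrow> (nat \<Rightarrow> real) \<Rightarrow> real" where
  "bilin_form A f g = (\<Sum>i<dim_row A. \<Sum>j<dim_row A. f i * g j * A$$(i,j))"

lemma scalar_prod_mult_mat_vec_bilin_form:
  assumes A: "A \<in> carrier_mat n n"
  shows "vec n f \<bullet> (A *\<^sub>v vec n g) = bilin_form A f g"
  using A unfolding bilin_form_def
  by (auto simp: scalar_prod_def sum_distrib_left atLeast0LessThan mult.assoc mult.commute
      mult.left_commute intro!: sum.cong)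

lemma bilin_form_lincomb_left:
  "bilin_form A (\<lambda>k. a * f k + c * g k) h = a * bilin_form A f h + c * bilin_form A g h"
  unfolding bilin_form_def by (simp add: algebra_simps sum.distrib sum_distrib_left)

lemma bilin_form_lincomb_right:
  "bilin_form A h (\<lambda>k. a * f k + c * g k) = a * bilin_form A h f + c * bilin_form A h g"
  unfolding bilin_form_def by (simp add: algebra_simps sum.distrib sum_distrib_left)

lemma bilin_form_sum_left:
  "bilin_form A (\<lambda>k. \<Sum>s\<in>F. c s * g s k) h = (\<Sum>s\<in>F. c s * bilin_form A (g s) h)"
  unfolding bilin_form_def
  by (simp add: sum_distrib_left sum_distrib_right mult.assoc sum.swap[of _ F])

lemma bilin_form_sym:
  assumes "\<And>i j. i < dim_row A \<Longrightarrow> j < dim_row A \<Longrightarrow> A$$(i,j) = A$$(j,i)"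
  shows "bilin_form A f g = bilin_form A g f"
  unfolding bilin_form_def by (subst sum.swap) (auto simp: assms mult.commute intro!: sum.cong)

definition has_positive_plane :: "real mat \<Rightarrow> bool" where
  "has_positive_plane A \<longleftrightarrow> (\<exists>f g. bilin_form A f f > 0 \<and>
     bilin_form A f f * bilin_form A g g > (bilin_form A f g)^2)"

text \<open>The quadratic form is nonpositive on the kernel of the at most one functional belonging to a
  positive eigenvalue; that kernel meets every plane nontrivially.\<close>
lemma no_positive_plane:
  fixes A :: "real mat"
  assumes A: "A \<in> carrier_mat n n" and sym: "A\<^sup>T = A" and np: "num_pos_eigenvalues A \<le> 1"
  shows "\<not> has_positive_plane A"
proof
  assume "has_positive_plane A"
  then obtain f g where pos: "bilin_form A f f > 0"
    and pd: "bilin_form A f f * bilin_form A g g > (bilin_form A f g)^2"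
    unfolding has_positive_plane_def by blast
  obtain ds L where len: "length ds = n" and cp: "char_poly A = (\<Prod>d\<leftarrow>ds. [:-d,1:])"
    and lin: "\<forall>i<n. linear_form n (L i)"
    and q: "\<forall>x\<in>carrier_vec n. quad_form A x = (\<Sum>i<n. ds!i * (L i x)^2)"
    using symmetric_mat_diagonal_form[OF A sym] by blast
  define P where "P = {i. i < n \<and> ds!i > 0}"
  have "card P \<le> 1" using np num_pos_eigenvalues_linear_factors[OF A cp len] unfolding P_def by simp
  moreover have "finite P" unfolding P_def by simp
  ultimately have "\<forall>a\<in>P. \<forall>b\<in>P. a = b" using card_le_Suc0_iff_eq by auto
  then obtain i0 where P: "P \<subseteq> {i0}" by (cases "P = {}") auto
  have nonpos: "quad_form A w \<le> 0" if w: "w \<in> carrier_vec n" and z: "\<forall>i\<in>P. L i w = 0" for w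
    unfolding q[rule_format, OF w]
  proof (rule sum_nonpos)
    fix i assume "i \<in> {..<n}"
    thus "ds!i * (L i w)^2 \<le> 0" using z unfolding P_def
      by (cases "ds!i > 0") (auto intro: mult_nonpos_nonneg)
  qed
  define u where "u = vec n f"
  define v where "v = vec n g"
  have uv: "u \<in> carrier_vec n" "v \<in> carrier_vec n" unfolding u_def v_def by auto
  define x where "x = (if i0 < n \<and> L i0 u \<noteq> 0 then L i0 v else 1)"
  define y where "y = (if i0 < n \<and> L i0 u \<noteq> 0 then - L i0 u else 0)"
  have xy: "(x, y) \<noteq> (0, 0)" unfolding x_def y_def by auto
  have "L i (x \<cdot>\<^sub>v u + y \<cdot>\<^sub>v v) = 0" if "i \<in> P" for i
    using that P lin uv unfolding P_def x_def y_def linear_form_def by auto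
  hence "quad_form A (x \<cdot>\<^sub>v u + y \<cdot>\<^sub>v v) \<le> 0" using nonpos uv by auto
  moreover have "quad_form A u = bilin_form A f f" "quad_form A v = bilin_form A g g"
    "u \<bullet> (A *\<^sub>v v) = bilin_form A f g"
    unfolding u_def v_def
    using scalar_prod_mult_mat_vec_self[OF A] scalar_prod_mult_mat_vec_bilin_form[OF A] by (metis vec_carrier)+
  hence "quad_form A (x \<cdot>\<^sub>v u + y \<cdot>\<^sub>v v)
      = x^2 * bilin_form A f f + 2 * x * y * bilin_form A f g + y^2 * bilin_form A g g"
    unfolding quad_form_lincomb[OF A sym uv] by simp
  ultimately show False using binary_quadratic_pos[OF pos pd xy] by simp
qed

lemma deg_part_vsmult: "x \<in> deg_part b i \<Longrightarrow> vsmult c x \<in> deg_part b i"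
  unfolding deg_part_def vsmult_def by auto

lemma deg_part_vzero: "vzero \<in> deg_part b i"
  unfolding deg_part_def vzero_def by auto

lemma deg_part_std_basis: "k < b i \<Longrightarrow> std_basis k \<in> deg_part b i"
  unfolding deg_part_def std_basis_def by auto

lemma additive_on_coordinate: "additive_on (deg_part b i) (\<lambda>x. x r)"
  unfolding additive_on_def vadd_def by auto

lemma additive_on_vzero:
  assumes "additive_on (deg_part b i) f"
  shows "f vzero = 0"
proof -
  have "f (vadd vzero vzero) = f vzero + f vzero"
    using assms deg_part_vzero unfolding additive_on_def by blast
  moreover have "vadd vzero vzero = vzero" unfolding vadd_def vzero_def by simp
  ultimately show ?thesis by simp
qed

lemma additive_on_vsmult_nat:
  assumes f: "additive_on (deg_part b i) f" and x: "x \<in> deg_part b i"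
  shows "f (vsmult (int n) x) = int n * f x"
proof (induction n)
  case 0
  have "vsmult (int 0) x = vzero" unfolding vsmult_def vzero_def by simp
  thus ?case using additive_on_vzero[OF f] by simp
next
  case (Suc n)
  have "vsmult (int (Suc n)) x = vadd (vsmult (int n) x) x"
    unfolding vsmult_def vadd_def by (auto simp: algebra_simps)
  moreover have "f (vadd (vsmult (int n) x) x) = f (vsmult (int n) x) + f x"
    using f deg_part_vsmult[OF x] x unfolding additive_on_def by blast
  ultimately show ?case using Suc by (simp add: algebra_simps)
qed

lemma additive_on_vsmult:
  assumes f: "additive_on (deg_part b i) f" and x: "x \<in> deg_part b i"
  shows "f (vsmult c x) = c * f x"
proof (cases "c \<ge> 0")
  case True
  then obtain n where "c = int n" by (rule nonneg_int_cases)
  thus ?thesis using additive_on_vsmult_nat[OF f x] by simp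
next
  case False
  then obtain n where n: "c = - int n" using neg_int_cases[of c] by auto
  have "vadd (vsmult c x) (vsmult (int n) x) = vzero" unfolding vsmult_def vadd_def vzero_def n by auto
  moreover have "f (vadd (vsmult c x) (vsmult (int n) x)) = f (vsmult c x) + f (vsmult (int n) x)"
    using f deg_part_vsmult[OF x] unfolding additive_on_def by blast
  ultimately have "f (vsmult c x) + f (vsmult (int n) x) = 0"
    using additive_on_vzero[OF f] by simp
  thus ?thesis using additive_on_vsmult_nat[OF f x] n by simp
qed

lemma additive_on_std_basis_expansion:
  assumes f: "additive_on (deg_part b i) f" and x: "x \<in> deg_part b i"
  shows "f x = (\<Sum>k<b i. x k * f (std_basis k))"
proof -
  define trunc where "trunc j = (\<lambda>k. if k < j then x k else (0::int))" for j
  have trunc_deg: "trunc j \<in> deg_part b i" for j using x unfolding trunc_def deg_part_def by auto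
  have "f (trunc j) = (\<Sum>k<j. x k * f (std_basis k))" if "j \<le> b i" for j
    using that
  proof (induction j)
    case 0
    have "trunc 0 = vzero" unfolding trunc_def vzero_def by simp
    thus ?case using additive_on_vzero[OF f] by simp
  next
    case (Suc j)
    have "trunc (Suc j) = vadd (trunc j) (vsmult (x j) (std_basis j))"
      unfolding trunc_def vadd_def vsmult_def std_basis_def by (auto intro!: ext simp: less_Suc_eq)
    hence "f (trunc (Suc j)) = f (trunc j) + f (vsmult (x j) (std_basis j))"
      using f trunc_deg deg_part_vsmult deg_part_std_basis Suc.prems unfolding additive_on_def
      by (metis Suc_le_lessD)
    also have "f (vsmult (x j) (std_basis j)) = x j * f (std_basis j)"
      using additive_on_vsmult[OF f deg_part_std_basis] Suc.prems by simp
    finally show ?case using Suc by simp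
  qed
  moreover have "trunc (b i) = x" using x unfolding trunc_def deg_part_def by (auto intro!: ext)
  ultimately show ?thesis by auto
qed

definition of_int_vec :: "(nat \<Rightarrow> int) \<Rightarrow> nat \<Rightarrow> 'a :: ring_1" where
  "of_int_vec u = (\<lambda>k. of_int (u k))"

section \<open>The cohomology algebra and its intersection form\<close>

locale cohomology_alg =
  fixes b :: "nat \<Rightarrow> nat"
    and m :: "nat \<Rightarrow> nat \<Rightarrow> (nat \<Rightarrow> int) \<Rightarrow> (nat \<Rightarrow> int) \<Rightarrow> (nat \<Rightarrow> int)"
    and p :: "(nat \<Rightarrow> int) \<Rightarrow> int"
  assumes cohomology_algebra: "cohomology_algebra b m p"
begin

abbreviation "D \<equiv> deg_part b"

lemma mult_closed: "i + j \<le> 4 \<Longrightarrow> x \<in> D i \<Longrightarrow> y \<in> D j \<Longrightarrow> m i j x y \<in> D (i + j)"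
  using cohomology_algebra unfolding cohomology_algebra_def by (elim conjE) metis

lemma mult_vadd_left: "i + j \<le> 4 \<Longrightarrow> x \<in> D i \<Longrightarrow> x' \<in> D i \<Longrightarrow> y \<in> D j \<Longrightarrow>
    m i j (vadd x x') y = vadd (m i j x y) (m i j x' y)"
  using cohomology_algebra unfolding cohomology_algebra_def by (elim conjE) metis

lemma mult_vadd_right: "i + j \<le> 4 \<Longrightarrow> x \<in> D i \<Longrightarrow> y \<in> D j \<Longrightarrow> y' \<in> D j \<Longrightarrow>
    m i j x (vadd y y') = vadd (m i j x y) (m i j x y')"
  using cohomology_algebra unfolding cohomology_algebra_def by (elim conjE) metis

lemma mult_assoc: "i + j + k \<le> 4 \<Longrightarrow> x \<in> D i \<Longrightarrow> y \<in> D j \<Longrightarrow> z \<in> D k \<Longrightarrow>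
    m (i + j) k (m i j x y) z = m i (j + k) x (m j k y z)"
  using cohomology_algebra unfolding cohomology_algebra_def by (elim conjE) metis

lemma mult_graded_commute: "i + j \<le> 4 \<Longrightarrow> x \<in> D i \<Longrightarrow> y \<in> D j \<Longrightarrow>
    m i j x y = vsmult ((-1) ^ (i * j)) (m j i y x)"
  using cohomology_algebra unfolding cohomology_algebra_def by (elim conjE) metis

lemma p_additive: "additive_on (D 4) p"
  using cohomology_algebra unfolding cohomology_algebra_def by (elim conjE) metis

lemma perfect_pairing: "i \<le> 4 \<Longrightarrow> additive_on (D (4 - i)) f \<Longrightarrow>
    \<exists>!x. x \<in> D i \<and> (\<forall>y\<in>D (4 - i). p (m i (4 - i) x y) = f y)"
  using cohomology_algebra unfolding cohomology_algebra_def by (elim conjE) metis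

lemma additive_on_mult_left:
  assumes ij: "i + j \<le> 4" and y: "y \<in> D j" and g: "additive_on (D (i + j)) g"
  shows "additive_on (D i) (\<lambda>x. g (m i j x y))"
  unfolding additive_on_def
proof (intro ballI)
  fix x x' assume x: "x \<in> D i" and x': "x' \<in> D i"
  have "m i j x y \<in> D (i+j)" "m i j x' y \<in> D (i+j)" using mult_closed[OF ij] x x' y by auto
  thus "g (m i j (vadd x x') y) = g (m i j x y) + g (m i j x' y)"
    unfolding mult_vadd_left[OF ij x x' y] using g unfolding additive_on_def by blast
qed

lemma additive_on_mult_right:
  assumes ij: "i + j \<le> 4" and x: "x \<in> D i" and g: "additive_on (D (i + j)) g"
  shows "additive_on (D j) (\<lambda>y. g (m i j x y))"
  unfolding additive_on_def
proof (intro ballI)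
  fix y y' assume y: "y \<in> D j" and y': "y' \<in> D j"
  have "m i j x y \<in> D (i+j)" "m i j x y' \<in> D (i+j)" using mult_closed[OF ij] x y y' by auto
  thus "g (m i j x (vadd y y')) = g (m i j x y) + g (m i j x y')"
    unfolding mult_vadd_right[OF ij x y y'] using g unfolding additive_on_def by blast
qed

lemma mult11_closed: "x \<in> D 1 \<Longrightarrow> y \<in> D 1 \<Longrightarrow> m 1 1 x y \<in> D 2"
  using mult_closed[of 1 1 x y] by (simp add: numeral_2_eq_2)

lemma mult11_anticommute: "x \<in> D 1 \<Longrightarrow> y \<in> D 1 \<Longrightarrow> m 1 1 y x = vsmult (-1) (m 1 1 x y)"
  using mult_graded_commute[of 1 1 y x] by simp

lemma mult11_self: assumes x: "x \<in> D 1" shows "m 1 1 x x = vzero"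
proof -
  have e: "m 1 1 x x = vsmult (-1) (m 1 1 x x)" using mult11_anticommute[OF x x] .
  have "m 1 1 x x r = 0" for r using fun_cong[OF e, of r] unfolding vsmult_def by simp
  thus ?thesis unfolding vzero_def by (intro ext) simp
qed

abbreviation \<Gamma> :: "(nat \<Rightarrow> int) \<Rightarrow> (nat \<Rightarrow> int) \<Rightarrow> int" where
  "\<Gamma> u v \<equiv> p (m 2 2 u v)"

abbreviation prod4 :: "(nat \<Rightarrow> int) \<Rightarrow> (nat \<Rightarrow> int) \<Rightarrow> (nat \<Rightarrow> int) \<Rightarrow> (nat \<Rightarrow> int) \<Rightarrow> int" where
  "prod4 x y z w \<equiv> \<Gamma> (m 1 1 x y) (m 1 1 z w)"

lemma \<Gamma>_additive_left: "v \<in> D 2 \<Longrightarrow> additive_on (D 2) (\<lambda>u. \<Gamma> u v)"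
  using additive_on_mult_left[of 2 2 v p] p_additive by simp

lemma \<Gamma>_additive_right: "u \<in> D 2 \<Longrightarrow> additive_on (D 2) (\<lambda>v. \<Gamma> u v)"
  using additive_on_mult_right[of 2 2 u p] p_additive by simp

lemma \<Gamma>_sym: "u \<in> D 2 \<Longrightarrow> v \<in> D 2 \<Longrightarrow> \<Gamma> u v = \<Gamma> v u"
  using mult_graded_commute[of 2 2 u v] by (simp add: vsmult_def)

lemma prod4_assoc:
  assumes "x \<in> D 1" "y \<in> D 1" "z \<in> D 1" "w \<in> D 1"
  shows "prod4 x y z w = p (m 1 3 x (m 2 1 (m 1 1 y z) w))"
proof -
  have "m 2 2 (m 1 1 x y) (m 1 1 z w) = m 1 3 x (m 1 2 y (m 1 1 z w))"
    using mult_assoc[of 1 1 2, OF _ assms(1,2) mult11_closed[OF assms(3,4)]] by (simp add: numeral_eq_Suc)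
  moreover have "m 2 1 (m 1 1 y z) w = m 1 2 y (m 1 1 z w)"
    using mult_assoc[of 1 1 1, OF _ assms(2,3,4)] by (simp add: numeral_eq_Suc)
  ultimately show ?thesis by simp
qed

lemma prod4_additive_middle:
  assumes x: "x \<in> D 1" and w: "w \<in> D 1"
  shows "additive_on (D 2) (\<lambda>u. p (m 1 3 x (m 2 1 u w)))"
proof -
  have "additive_on (D 3) (\<lambda>v. p (m 1 3 x v))"
    using additive_on_mult_right[of 1 3 x p] p_additive x by simp
  thus ?thesis using additive_on_mult_left[of 2 1 w "\<lambda>v. p (m 1 3 x v)"] w by simp
qed

lemma prod4_swap34:
  assumes "x \<in> D 1" "y \<in> D 1" "z \<in> D 1" "w \<in> D 1"
  shows "prod4 x y w z = - prod4 x y z w"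
  using mult11_anticommute[of z w]
    additive_on_vsmult[OF \<Gamma>_additive_right[OF mult11_closed[of x y]] mult11_closed[of z w], of "-1"]
    assms by simp

lemma prod4_swap23:
  assumes "x \<in> D 1" "y \<in> D 1" "z \<in> D 1" "w \<in> D 1"
  shows "prod4 x z y w = - prod4 x y z w"
  using prod4_assoc[of x y z w] prod4_assoc[of x z y w] mult11_anticommute[of y z]
    additive_on_vsmult[OF prod4_additive_middle[of x w] mult11_closed[of y z], of "-1"] assms
  by simp

lemma prod4_eq12: "x \<in> D 1 \<Longrightarrow> z \<in> D 1 \<Longrightarrow> w \<in> D 1 \<Longrightarrow> prod4 x x z w = 0"
  using mult11_self[of x] additive_on_vzero[OF \<Gamma>_additive_left[OF mult11_closed[of z w]]] by simp

lemma prod4_eq23: "x \<in> D 1 \<Longrightarrow> y \<in> D 1 \<Longrightarrow> w \<in> D 1 \<Longrightarrow> prod4 x y y w = 0"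
  using prod4_assoc[of x y y w] mult11_self[of y] additive_on_vzero[OF prod4_additive_middle[of x w]]
  by simp

lemma prod4_eq13: "x \<in> D 1 \<Longrightarrow> y \<in> D 1 \<Longrightarrow> z \<in> D 1 \<Longrightarrow> prod4 x y x z = 0"
  using prod4_swap23[of x x y z] prod4_eq12[of x y z] by simp

lemma prod4_eq24: "x \<in> D 1 \<Longrightarrow> y \<in> D 1 \<Longrightarrow> z \<in> D 1 \<Longrightarrow> prod4 x y z y = 0"
  using prod4_swap34[of x y y z] prod4_eq23[of x y z] by simp

lemma prod4_eq14: "x \<in> D 1 \<Longrightarrow> y \<in> D 1 \<Longrightarrow> z \<in> D 1 \<Longrightarrow> prod4 x y z x = 0"
  using prod4_swap34[of x y x z] prod4_eq13[of x y z] by simp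

lemma prod4_swap_pairs:
  "x \<in> D 1 \<Longrightarrow> y \<in> D 1 \<Longrightarrow> z \<in> D 1 \<Longrightarrow> w \<in> D 1 \<Longrightarrow> prod4 z w x y = prod4 x y z w"
  using \<Gamma>_sym[OF mult11_closed[of z w] mult11_closed[of x y]] by simp

lemma \<Gamma>_std_basis_expansion:
  assumes u: "u \<in> D 2" and v: "v \<in> D 2"
  shows "\<Gamma> u v = (\<Sum>k<b 2. \<Sum>l<b 2. u k * v l * \<Gamma> (std_basis k) (std_basis l))"
proof -
  have "\<Gamma> u v = (\<Sum>l<b 2. v l * \<Gamma> u (std_basis l))"
    using additive_on_std_basis_expansion[OF \<Gamma>_additive_right[OF u] v] .
  also have "\<dots> = (\<Sum>l<b 2. v l * (\<Sum>k<b 2. u k * \<Gamma> (std_basis k) (std_basis l)))"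
    using additive_on_std_basis_expansion[OF \<Gamma>_additive_left[OF deg_part_std_basis] u] by simp
  also have "\<dots> = (\<Sum>k<b 2. \<Sum>l<b 2. u k * v l * \<Gamma> (std_basis k) (std_basis l))"
    by (subst sum.swap) (simp add: sum_distrib_left algebra_simps)
  finally show ?thesis .
qed

lemma Gamma_matrix_carrier: "Gamma_matrix b m p \<in> carrier_mat (b 2) (b 2)"
  unfolding Gamma_matrix_def by simp

lemma Gamma_matrix_index:
  "k < b 2 \<Longrightarrow> l < b 2 \<Longrightarrow> Gamma_matrix b m p $$ (k,l) = of_int (\<Gamma> (std_basis k) (std_basis l))"
  unfolding Gamma_matrix_def Gamma_form_def by simp

lemma Gamma_matrix_sym_index:
  "k < b 2 \<Longrightarrow> l < b 2 \<Longrightarrow> Gamma_matrix b m p $$ (k,l) = Gamma_matrix b m p $$ (l,k)"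
  using Gamma_matrix_index \<Gamma>_sym deg_part_std_basis by metis

lemma Gamma_matrix_sym: "(Gamma_matrix b m p)\<^sup>T = Gamma_matrix b m p"
  using Gamma_matrix_carrier by (intro eq_matI) (auto simp: Gamma_matrix_sym_index)

lemma bilin_form_Gamma_matrix_sym: "bilin_form (Gamma_matrix b m p) f g = bilin_form (Gamma_matrix b m p) g f"
  by (rule bilin_form_sym) (use Gamma_matrix_carrier Gamma_matrix_sym_index in auto)

lemma bilin_form_Gamma_matrix:
  assumes "u \<in> D 2" "v \<in> D 2"
  shows "bilin_form (Gamma_matrix b m p) (of_int_vec u) (of_int_vec v) = of_int (\<Gamma> u v)"
  unfolding bilin_form_def of_int_vec_def \<Gamma>_std_basis_expansion[OF assms] using Gamma_matrix_carrier
  by (simp add: Gamma_matrix_index)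

end

section \<open>Products of degree-one classes when b+ = 1\<close>

text \<open>Replace W1, W2 by the dual pair w1, w2 of U, V and correct them by multiples of U and V;
  then f = U + h1 and g = V + h2 satisfy B f f = B g g = 2 and B f g = 0.\<close>
lemma isotropic_pair_positive_plane:
  fixes B :: "(nat \<Rightarrow> real) \<Rightarrow> (nat \<Rightarrow> real) \<Rightarrow> real"
  assumes lin_l: "\<And>a f c g h. B (\<lambda>k. a * f k + c * g k) h = a * B f h + c * B g h"
    and lin_r: "\<And>a f c g h. B h (\<lambda>k. a * f k + c * g k) = a * B h f + c * B h g"
    and sym: "\<And>f g. B f g = B g f"
    and UU: "B U U = 0" and VV: "B V V = 0" and UV: "B U V = 0"
    and det: "B W1 U * B W2 V - B W2 U * B W1 V \<noteq> 0"
  shows "\<exists>f g. B f f > 0 \<and> B f f * B g g > (B f g)^2"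
proof -
  define a1 where "a1 = B W1 U"
  define b1 where "b1 = B W1 V"
  define a2 where "a2 = B W2 U"
  define b2 where "b2 = B W2 V"
  define dd where "dd = a1 * b2 - a2 * b1"
  have dd: "dd \<noteq> 0" unfolding dd_def a1_def b1_def a2_def b2_def using det .
  define w1 where "w1 = (\<lambda>k. (b2/dd) * W1 k + (-b1/dd) * W2 k)"
  define w2 where "w2 = (\<lambda>k. (-a2/dd) * W1 k + (a1/dd) * W2 k)"
  have frac: "x/dd*z + y/dd*w = (x*z+y*w)/dd" for x y z w by (simp add: add_divide_distrib)
  have n1: "b2*a1 + -b1*a2 = dd" "b2*b1 + -b1*b2 = 0" "-a2*a1 + a1*a2 = 0" "-a2*b1 + a1*b2 = dd"
    unfolding dd_def by (simp_all add: algebra_simps)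
  have w1U: "B w1 U = 1" unfolding w1_def lin_l unfolding a1_def[symmetric] a2_def[symmetric] frac n1 using dd by simp
  have w1V: "B w1 V = 0" unfolding w1_def lin_l unfolding b1_def[symmetric] b2_def[symmetric] frac n1 by simp
  have w2U: "B w2 U = 0" unfolding w2_def lin_l unfolding a1_def[symmetric] a2_def[symmetric] frac n1 by simp
  have w2V: "B w2 V = 1" unfolding w2_def lin_l unfolding b1_def[symmetric] b2_def[symmetric] frac n1 using dd by simp
  define \<alpha> where "\<alpha> = B w1 w1"
  define \<beta> where "\<beta> = B w1 w2"
  define \<gamma> where "\<gamma> = B w2 w2"
  define h1 where "h1 = (\<lambda>k. 1 * (\<lambda>k. 1 * w1 k + (-\<alpha>/2) * U k) k + (-\<beta>) * V k)"
  define h2 where "h2 = (\<lambda>k. 1 * w2 k + (-\<gamma>/2) * V k)"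
  define f where "f = (\<lambda>k. 1 * U k + 1 * h1 k)"
  define g where "g = (\<lambda>k. 1 * V k + 1 * h2 k)"
  have at: "B U w1 = 1" "B V w1 = 0" "B U w2 = 0" "B V w2 = 1" "B V U = 0" "B w2 w1 = \<beta>"
    using w1U w1V w2U w2V UV sym \<beta>_def by metis+
  note simps = UU VV UV at w1U w1V w2U w2V \<alpha>_def[symmetric] \<beta>_def[symmetric] \<gamma>_def[symmetric] algebra_simps
  have "B f f = 2" unfolding f_def h1_def lin_l lin_r by (simp add: simps)
  moreover have "B g g = 2" unfolding g_def h2_def lin_l lin_r by (simp add: simps)
  moreover have "B f g = 0" unfolding f_def g_def h1_def h2_def lin_l lin_r by (simp add: simps)
  ultimately show ?thesis by (intro exI[of _ f] exI[of _ g]) simp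
qed

lemma int_lin_indep_pair_minor:
  fixes u v :: "nat \<Rightarrow> int"
  assumes uv: "u \<noteq> v" and ind: "int_lin_indep {u,v}"
  shows "\<exists>i j. u i * v j - u j * v i \<noteq> 0"
proof (rule ccontr)
  assume "\<not> ?thesis"
  hence minors: "\<And>i j. u i * v j - u j * v i = 0" by auto
  have indc: "\<And>c. (\<forall>k. c u * u k + c v * v k = 0) \<Longrightarrow> c u = 0 \<and> c v = 0"
    using ind uv unfolding int_lin_indep_def by auto
  show False
  proof (cases "\<forall>k. u k = 0")
    case True
    have "(\<lambda>s. if s = u then (1::int) else 0) u = 0"
      using indc[of "\<lambda>s. if s = u then 1 else 0"] True uv by auto
    thus False by simp
  next
    case False
    then obtain i where i: "u i \<noteq> 0" by auto
    define c where "c = (\<lambda>s. if s = u then v i else - u i)"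
    have "\<forall>k. c u * u k + c v * v k = 0" unfolding c_def using uv minors[of i]
      by (auto simp: algebra_simps)
    hence "c v = 0" using indc by blast
    thus False using i uv unfolding c_def by simp
  qed
qed

lemma int_lin_indep_subset:
  assumes S: "int_lin_indep S" and TS: "T \<subseteq> S"
  shows "int_lin_indep T"
  unfolding int_lin_indep_def
proof (intro conjI allI impI ballI)
  have fin: "finite S" using S unfolding int_lin_indep_def by simp
  thus "finite T" using TS finite_subset by auto
  fix c s assume z: "\<forall>k. (\<Sum>s\<in>T. c s * s k) = 0" and s: "s \<in> T"
  define c' where "c' = (\<lambda>s. if s \<in> T then c s else 0)"
  have "(\<Sum>s\<in>S. c' s * s k) = (\<Sum>s\<in>T. c s * s k)" for k
  proof -
    have "(\<Sum>s\<in>S. c' s * s k) = (\<Sum>s\<in>T. c' s * s k)"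
      using fin TS by (intro sum.mono_neutral_right) (auto simp: c'_def)
    thus ?thesis by (simp add: c'_def)
  qed
  hence "c' s = 0" using z S s TS unfolding int_lin_indep_def by (metis subsetD)
  thus "c s = 0" using s unfolding c'_def by simp
qed

lemma zrank_le_1:
  assumes H: "\<And>u v. u \<in> H \<Longrightarrow> v \<in> H \<Longrightarrow> u \<noteq> v \<Longrightarrow> \<not> int_lin_indep {u,v}"
  shows "zrank H \<le> 1"
proof -
  define P where "P = (\<lambda>n. \<exists>S. S \<subseteq> H \<and> int_lin_indep S \<and> card S = n)"
  have P0: "P 0" unfolding P_def int_lin_indep_def by (intro exI[of _ "{}"]) auto
  have bound: "n \<le> 1" if "P n" for n
  proof (rule ccontr)
    assume "\<not> n \<le> 1"
    from that obtain S where S: "S \<subseteq> H" "int_lin_indep S" "card S = n" unfolding P_def by blast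
    have fin: "finite S" using S unfolding int_lin_indep_def by simp
    have "\<not> card S \<le> Suc 0" using S \<open>\<not> n \<le> 1\<close> by simp
    then obtain u v where uv: "u \<in> S" "v \<in> S" "u \<noteq> v" using card_le_Suc0_iff_eq[OF fin] by blast
    have "int_lin_indep {u,v}" using int_lin_indep_subset[OF S(2)] uv by auto
    thus False using H uv S by blast
  qed
  have "P (Greatest P)" using GreatestI_nat[of P 0 1] P0 bound by blast
  thus ?thesis using bound unfolding zrank_def P_def by blast
qed

locale bplus_one = cohomology_alg +
  assumes one_pos_eigenvalue: "num_pos_eigenvalues (Gamma_matrix b m p) = 1"
begin

abbreviation "G \<equiv> Gamma_matrix b m p"

lemma no_positive_plane_Gamma: "\<not> has_positive_plane G"
  using no_positive_plane[OF Gamma_matrix_carrier Gamma_matrix_sym] one_pos_eigenvalue by simp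

lemma bilin_form_G_mult11:
  assumes "x \<in> D 1" "y \<in> D 1" "z \<in> D 1" "w \<in> D 1"
  shows "bilin_form G (of_int_vec (m 1 1 x y)) (of_int_vec (m 1 1 z w)) = of_int (prod4 x y z w)"
  using bilin_form_Gamma_matrix[OF mult11_closed mult11_closed] assms by simp

text \<open>If a = p(xyzw) is nonzero and s is its sign, then xy + s zw and xz - s yw span a
  positive definite plane: both have square 2|a|, and they are orthogonal, because p(x1 x2 x3 x4)
  is alternating.\<close>
lemma prod4_eq_0:
  assumes x: "x \<in> D 1" and y: "y \<in> D 1" and z: "z \<in> D 1" and w: "w \<in> D 1"
  shows "prod4 x y z w = 0"
proof (rule ccontr)
  define a where "a = prod4 x y z w"
  assume "prod4 x y z w \<noteq> 0"
  hence a0: "a \<noteq> 0" unfolding a_def .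
  define s where "s = (if a > 0 then 1 else -1 :: real)"
  have sa: "s * real_of_int a > 0" unfolding s_def using a0 by auto
  have s2: "s * s = 1" unfolding s_def by simp
  note D1 = x y z w
  have vanish: "prod4 x y x y = 0" "prod4 z w z w = 0" "prod4 x z x z = 0" "prod4 y w y w = 0"
    "prod4 x y x z = 0" "prod4 x y y w = 0" "prod4 z w x z = 0" "prod4 z w y w = 0"
    using prod4_eq13 prod4_eq23 prod4_eq14 prod4_eq24 D1 by simp_all
  have swapped: "prod4 x z y w = - a" "prod4 z w x y = a" "prod4 y w x z = - a"
    using prod4_swap23[of x y z w] prod4_swap_pairs[of x y z w] prod4_swap_pairs[of x z y w] D1
    unfolding a_def by simp_all
  define f where "f = (\<lambda>k. 1 * of_int_vec (m 1 1 x y) k + s * of_int_vec (m 1 1 z w) k)"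
  define g where "g = (\<lambda>k. 1 * of_int_vec (m 1 1 x z) k + (- s) * of_int_vec (m 1 1 y w) k)"
  note lin = bilin_form_lincomb_left bilin_form_lincomb_right
  note gram = bilin_form_G_mult11[OF D1(1,2)] bilin_form_G_mult11[OF D1(3,4)]
    bilin_form_G_mult11[OF D1(1,3)] bilin_form_G_mult11[OF D1(2,4)]
  have ff: "bilin_form G f f = 2 * (s * a)"
    unfolding f_def lin gram[OF D1(1,2)] gram[OF D1(3,4)] vanish swapped a_def[symmetric]
    by (simp add: algebra_simps)
  have gg: "bilin_form G g g = 2 * (s * a)"
    unfolding g_def lin gram[OF D1(1,3)] gram[OF D1(2,4)] vanish swapped by (simp add: s2 algebra_simps)
  have fg: "bilin_form G f g = 0"
    unfolding f_def g_def lin gram[OF D1(1,3)] gram[OF D1(2,4)] vanish by simp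
  have "has_positive_plane G"
    unfolding has_positive_plane_def using ff gg fg sa mult_pos_pos[OF sa sa]
    by (intro exI[of _ f] exI[of _ g]) (simp add: algebra_simps)
  thus False using no_positive_plane_Gamma by blast
qed

lemma I_T_memE:
  assumes "u \<in> I_T b m"
  obtains F c where "finite F" "F \<subseteq> {m 1 1 x y |x y. x \<in> D 1 \<and> y \<in> D 1}"
    "u = (\<lambda>k. \<Sum>s\<in>F. c s * s k)"
  using assms unfolding I_T_def int_span_def by blast

lemma I_T_subset_deg2: "I_T b m \<subseteq> D 2"
proof
  fix u assume "u \<in> I_T b m"
  then obtain F c where F: "F \<subseteq> {m 1 1 x y |x y. x \<in> D 1 \<and> y \<in> D 1}"
    and u: "u = (\<lambda>k. \<Sum>s\<in>F. c s * s k)"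
    by (rule I_T_memE)
  have "s \<in> D 2" if "s \<in> F" for s using F that mult11_closed by blast
  thus "u \<in> D 2" unfolding u deg_part_def by auto
qed

lemma mult11_in_I_T: "x \<in> D 1 \<Longrightarrow> y \<in> D 1 \<Longrightarrow> m 1 1 x y \<in> I_T b m"
  unfolding I_T_def int_span_def
  by (rule CollectI, rule exI[of _ "{m 1 1 x y}"], rule exI[of _ "\<lambda>_. 1"]) auto

lemma I_T_isotropic:
  assumes u: "u \<in> I_T b m" and v: "v \<in> I_T b m"
  shows "bilin_form G (of_int_vec u) (of_int_vec v) = 0"
proof -
  obtain F c where F: "F \<subseteq> {m 1 1 x y |x y. x \<in> D 1 \<and> y \<in> D 1}" and u: "u = (\<lambda>k. \<Sum>s\<in>F. c s * s k)"
    using u by (rule I_T_memE)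
  obtain F' c' where F': "F' \<subseteq> {m 1 1 x y |x y. x \<in> D 1 \<and> y \<in> D 1}" and v: "v = (\<lambda>k. \<Sum>s\<in>F'. c' s * s k)"
    using v by (rule I_T_memE)
  have generators: "bilin_form G (of_int_vec t) (of_int_vec s) = 0" if "t \<in> F'" "s \<in> F" for s t
    using that F F' bilin_form_G_mult11 prod4_eq_0 by fastforce
  have of_int_vec_sum: "of_int_vec (\<lambda>k. \<Sum>s\<in>X. e s * s k) = (\<lambda>k. \<Sum>s\<in>X. real_of_int (e s) * of_int_vec s k)"
    for X e unfolding of_int_vec_def by simp
  have "bilin_form G (of_int_vec u) (of_int_vec v)
      = (\<Sum>s\<in>F. of_int (c s) * bilin_form G (of_int_vec v) (of_int_vec s))"
    unfolding u of_int_vec_sum bilin_form_sum_left using bilin_form_Gamma_matrix_sym by simp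
  also have "\<dots> = 0" unfolding v of_int_vec_sum bilin_form_sum_left using generators by simp
  finally show ?thesis .
qed

lemma Gamma_dual_coordinate: "\<exists>w \<in> D 2. \<forall>y\<in>D 2. \<Gamma> w y = y i"
  using perfect_pairing[of 2 "\<lambda>y. y i"] additive_on_coordinate by (simp add: Bex_def) metis

lemma I_T_no_indep_pair:
  assumes u: "u \<in> I_T b m" and v: "v \<in> I_T b m" and uv: "u \<noteq> v"
  shows "\<not> int_lin_indep {u,v}"
proof
  assume "int_lin_indep {u,v}"
  then obtain i j where ij: "u i * v j - u j * v i \<noteq> 0" using int_lin_indep_pair_minor[OF uv] by blast
  obtain w1 where w1: "w1 \<in> D 2" "\<forall>y\<in>D 2. \<Gamma> w1 y = y i" using Gamma_dual_coordinate by blast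
  obtain w2 where w2: "w2 \<in> D 2" "\<forall>y\<in>D 2. \<Gamma> w2 y = y j" using Gamma_dual_coordinate by blast
  have uv2: "u \<in> D 2" "v \<in> D 2" using I_T_subset_deg2 u v by auto
  have "\<exists>f g. bilin_form G f f > 0 \<and> bilin_form G f f * bilin_form G g g > (bilin_form G f g)^2"
  proof (rule isotropic_pair_positive_plane)
    show "bilin_form G (of_int_vec w1) (of_int_vec u) * bilin_form G (of_int_vec w2) (of_int_vec v)
        - bilin_form G (of_int_vec w2) (of_int_vec u) * bilin_form G (of_int_vec w1) (of_int_vec v) \<noteq> 0"
      using ij bilin_form_Gamma_matrix w1 w2 uv2 by (simp flip: of_int_mult of_int_diff)
  qed (use bilin_form_lincomb_left bilin_form_lincomb_right bilin_form_Gamma_matrix_sym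
      I_T_isotropic u v in auto)
  thus False using no_positive_plane_Gamma unfolding has_positive_plane_def by blast
qed

lemma zrank_I_T_le_1: "zrank (I_T b m) \<le> 1"
  by (rule zrank_le_1) (use I_T_no_indep_pair in blast)

end

section \<open>Skew-symmetric forms have even rank\<close>

definition qscale :: "rat \<Rightarrow> (nat \<Rightarrow> rat) \<Rightarrow> (nat \<Rightarrow> rat)" where
  "qscale c f = (\<lambda>i. c * f i)"

interpretation V: vector_space qscale
  by unfold_locales (auto simp: qscale_def algebra_simps fun_eq_iff)

lemma qscale_apply: "qscale c f i = c * f i"
  unfolding qscale_def by simp

lemma sum_fun_apply: "(\<Sum>v\<in>t. F v) i = (\<Sum>v\<in>t. F v i)"
  by (induction t rule: infinite_finite_induct) auto

locale skew_matrix =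
  fixes k :: nat and S :: "nat \<Rightarrow> nat \<Rightarrow> int"
  assumes skew: "\<And>a c. S a c = - S c a"
begin

definition \<omega> :: "(nat \<Rightarrow> rat) \<Rightarrow> (nat \<Rightarrow> rat) \<Rightarrow> rat" where
  "\<omega> f g = (\<Sum>a<k. \<Sum>c<k. f a * g c * of_int (S a c))"

lemma \<omega>_add_left: "\<omega> (f + g) h = \<omega> f h + \<omega> g h"
  unfolding \<omega>_def by (simp add: algebra_simps sum.distrib)

lemma \<omega>_add_right: "\<omega> h (f + g) = \<omega> h f + \<omega> h g"
  unfolding \<omega>_def by (simp add: algebra_simps sum.distrib)

lemma \<omega>_diff_left: "\<omega> (f - g) h = \<omega> f h - \<omega> g h"
  unfolding \<omega>_def by (simp add: algebra_simps sum_subtractf)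

lemma \<omega>_diff_right: "\<omega> h (f - g) = \<omega> h f - \<omega> h g"
  unfolding \<omega>_def by (simp add: algebra_simps sum_subtractf)

lemma \<omega>_scale_left: "\<omega> (qscale c f) h = c * \<omega> f h"
  unfolding \<omega>_def by (simp add: qscale_apply algebra_simps sum_distrib_left)

lemma \<omega>_scale_right: "\<omega> h (qscale c f) = c * \<omega> h f"
  unfolding \<omega>_def by (simp add: qscale_apply algebra_simps sum_distrib_left)

lemma \<omega>_zero_left: "\<omega> 0 h = 0"
  unfolding \<omega>_def by simp

lemma \<omega>_skew: "\<omega> f g = - \<omega> g f"
proof -
  have "\<omega> f g = (\<Sum>c<k. \<Sum>a<k. f a * g c * of_int (S a c))" unfolding \<omega>_def by (rule sum.swap)
  also have "\<dots> = (\<Sum>c<k. \<Sum>a<k. - (g c * f a * of_int (S c a)))"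
  proof (intro sum.cong refl)
    fix a c
    have "of_int (S a c) = - (of_int (S c a) :: rat)" using skew[of a c] by simp
    thus "f a * g c * of_int (S a c) = - (g c * f a * of_int (S c a))" by simp
  qed
  also have "\<dots> = - \<omega> g f" unfolding \<omega>_def by (simp add: sum_negf)
  finally show ?thesis .
qed

lemma \<omega>_self: "\<omega> f f = 0"
  using \<omega>_skew[of f f] by simp

definition radical :: "(nat \<Rightarrow> rat) set \<Rightarrow> (nat \<Rightarrow> rat) set" where
  "radical U = {x \<in> U. \<forall>y\<in>U. \<omega> x y = 0}"

definition symplectic_proj :: "(nat \<Rightarrow> rat) \<Rightarrow> (nat \<Rightarrow> rat) \<Rightarrow> (nat \<Rightarrow> rat) \<Rightarrow> nat \<Rightarrow> rat" where
  "symplectic_proj e f x = x - qscale (\<omega> x f) e + qscale (\<omega> x e) f"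

lemma symplectic_proj:
  assumes ef: "\<omega> e f = 1"
  shows "\<omega> (symplectic_proj e f x) e = 0" "\<omega> (symplectic_proj e f x) f = 0"
    "x = symplectic_proj e f x + qscale (\<omega> x f) e - qscale (\<omega> x e) f"
proof -
  have fe: "\<omega> f e = -1" using \<omega>_skew[of f e] ef by simp
  show "\<omega> (symplectic_proj e f x) e = 0" "\<omega> (symplectic_proj e f x) f = 0"
    unfolding symplectic_proj_def \<omega>_add_left \<omega>_diff_left \<omega>_scale_left \<omega>_self ef fe by simp_all
  show "x = symplectic_proj e f x + qscale (\<omega> x f) e - qscale (\<omega> x e) f"
    unfolding symplectic_proj_def by (simp add: algebra_simps)
qed

lemma symplectic_proj_in_subspace:
  "V.subspace U \<Longrightarrow> e \<in> U \<Longrightarrow> f \<in> U \<Longrightarrow> x \<in> U \<Longrightarrow> symplectic_proj e f x \<in> U"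
  unfolding symplectic_proj_def by (metis V.subspace_add V.subspace_diff V.subspace_scale)

lemma radical_symplectic_complement:
  assumes U: "V.subspace U" and e: "e \<in> U" and f: "f \<in> U" and ef: "\<omega> e f = 1"
  shows "radical {x \<in> U. \<omega> x e = 0 \<and> \<omega> x f = 0} = radical U"
proof
  show "radical U \<subseteq> radical {x \<in> U. \<omega> x e = 0 \<and> \<omega> x f = 0}"
    unfolding radical_def using e f by auto
  show "radical {x \<in> U. \<omega> x e = 0 \<and> \<omega> x f = 0} \<subseteq> radical U"
  proof
    fix x assume "x \<in> radical {x \<in> U. \<omega> x e = 0 \<and> \<omega> x f = 0}"
    hence x: "x \<in> U" "\<omega> x e = 0" "\<omega> x f = 0"
      and z: "\<And>y. y \<in> U \<Longrightarrow> \<omega> y e = 0 \<Longrightarrow> \<omega> y f = 0 \<Longrightarrow> \<omega> x y = 0"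
      unfolding radical_def by auto
    have "\<omega> x y = 0" if y: "y \<in> U" for y
    proof -
      have "\<omega> x y = \<omega> x (symplectic_proj e f y) + \<omega> y f * \<omega> x e - \<omega> y e * \<omega> x f"
        by (subst symplectic_proj(3)[OF ef, of y]) (simp add: \<omega>_add_right \<omega>_diff_right \<omega>_scale_right)
      thus ?thesis using z[OF symplectic_proj_in_subspace[OF U e f y]] symplectic_proj[OF ef] x by simp
    qed
    thus "x \<in> radical U" unfolding radical_def using x by auto
  qed
qed

lemma symplectic_complement_basis:
  assumes U: "V.subspace U" and e: "e \<in> U" and f: "f \<in> U" and ef: "\<omega> e f = 1"
    and B': "B' \<subseteq> {x \<in> U. \<omega> x e = 0 \<and> \<omega> x f = 0}" "V.independent B'"
    "V.span B' = {x \<in> U. \<omega> x e = 0 \<and> \<omega> x f = 0}"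
  shows "V.independent (insert e (insert f B'))" "U \<subseteq> V.span (insert e (insert f B'))"
    "e \<notin> B'" "f \<notin> B'" "e \<noteq> f"
proof -
  have fe: "\<omega> f e = -1" using \<omega>_skew[of f e] ef by simp
  show eB': "e \<notin> B'" and fB': "f \<notin> B'" and ef': "e \<noteq> f" using B'(1) ef fe \<omega>_self[of e] by auto
  have "f \<notin> V.span B'" using B'(3) fe by simp
  hence ind1: "V.independent (insert f B')" using V.independent_insert B'(2) by auto
  have "e \<notin> V.span (insert f B')"
  proof
    assume "e \<in> V.span (insert f B')"
    then obtain c where "e - qscale c f \<in> V.span B'" using V.span_breakdown_eq by blast
    hence "\<omega> (e - qscale c f) f = 0" using B'(3) by simp
    thus False unfolding \<omega>_diff_left \<omega>_scale_left ef \<omega>_self by simp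
  qed
  thus "V.independent (insert e (insert f B'))" using V.independent_insert ind1 ef' by auto
  show "U \<subseteq> V.span (insert e (insert f B'))"
  proof
    fix x assume "x \<in> U"
    hence "symplectic_proj e f x \<in> V.span B'"
      using B'(3) symplectic_proj_in_subspace[OF U e f] symplectic_proj[OF ef] by simp
    hence "symplectic_proj e f x \<in> V.span (insert e (insert f B'))"
      using V.span_mono[of B' "insert e (insert f B')"] by auto
    hence "symplectic_proj e f x + qscale (\<omega> x f) e - qscale (\<omega> x e) f \<in> V.span (insert e (insert f B'))"
      by (intro V.span_add V.span_diff V.span_scale) (auto intro: V.span_base)
    thus "x \<in> V.span (insert e (insert f B'))" using symplectic_proj(3)[OF ef, of x] by simp
  qed
qed

lemma symplectic_reduction:
  assumes fin: "finite B" and ind: "V.independent B"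
    and e: "e \<in> V.span B" and f: "f \<in> V.span B" and ef: "\<omega> e f = 1"
  obtains B' where "finite B'" "V.independent B'" "card B' + 2 = card B"
    "radical (V.span B') = radical (V.span B)"
proof -
  define U where "U = V.span B"
  have eU: "e \<in> U" and fU: "f \<in> U" and subU: "V.subspace U" unfolding U_def using e f by auto
  define U' where "U' = {x \<in> U. \<omega> x e = 0 \<and> \<omega> x f = 0}"
  have subU': "V.subspace U'" unfolding V.subspace_def U'_def
    using subU V.subspace_0 V.subspace_add V.subspace_scale
    by (auto simp: \<omega>_add_left \<omega>_scale_left \<omega>_zero_left)
  obtain B' where B': "B' \<subseteq> U'" "V.independent B'" "U' \<subseteq> V.span B'" "card B' = V.dim U'"
    by (rule V.basis_exists)
  have finB': "finite B'" using V.independent_span_bound[OF fin B'(2)] B'(1) U_def U'_def by auto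
  have spanB': "V.span B' = U'" using V.span_minimal[OF B'(1) subU'] B'(3) by auto
  note basis = symplectic_complement_basis[OF subU eU fU ef B'(1,2)[unfolded U'_def] spanB'[unfolded U'_def]]
  have "insert e (insert f B') \<subseteq> U" using eU fU B'(1) unfolding U'_def by auto
  hence "card (insert e (insert f B')) = V.dim U" using V.basis_card_eq_dim basis(1,2) by blast
  moreover have "card (insert e (insert f B')) = card B' + 2" using finB' basis(3-5) by simp
  moreover have "V.dim U = card B" unfolding U_def using V.dim_span_eq_card_independent[OF ind] .
  moreover have "radical (V.span B') = radical U"
    using radical_symplectic_complement[OF subU eU fU ef] spanB' unfolding U'_def by simp
  ultimately show ?thesis using that finB' B'(2) unfolding U_def by simp
qed

lemma radical_dim_parity:
  assumes "finite B" "V.independent B"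
  shows "V.dim (radical (V.span B)) \<le> card B \<and> even (card B - V.dim (radical (V.span B)))"
  using assms
proof (induction "card B" arbitrary: B rule: less_induct)
  case less
  have le: "V.dim (radical (V.span B)) \<le> card B"
    by (rule V.dim_le_card[OF _ less.prems(1)]) (auto simp: radical_def)
  show ?case
  proof (cases "\<forall>x\<in>V.span B. \<forall>y\<in>V.span B. \<omega> x y = 0")
    case True
    hence "radical (V.span B) = V.span B" unfolding radical_def by auto
    thus ?thesis using V.dim_span_eq_card_independent[OF less.prems(2)] by simp
  next
    case False
    then obtain e f0 where e: "e \<in> V.span B" and f0: "f0 \<in> V.span B" and ef0: "\<omega> e f0 \<noteq> 0" by auto
    define f where "f = qscale (1 / \<omega> e f0) f0"
    have f: "f \<in> V.span B" unfolding f_def using f0 V.span_scale by auto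
    have ef: "\<omega> e f = 1" unfolding f_def \<omega>_scale_right using ef0 by simp
    obtain B' where B': "finite B'" "V.independent B'" and card: "card B' + 2 = card B"
      and rad: "radical (V.span B') = radical (V.span B)"
      using symplectic_reduction[OF less.prems e f ef] by blast
    have "card B' < card B" using card by simp
    from less.hyps[OF this B'] have IH: "V.dim (radical (V.span B)) \<le> card B'"
      "even (card B' - V.dim (radical (V.span B)))" unfolding rad by auto
    have "card B - V.dim (radical (V.span B)) = (card B' - V.dim (radical (V.span B))) + 2"
      using IH(1) card by linarith
    thus ?thesis using IH(2) le by simp
  qed
qed


end

lemma exists_common_denominator:
  "finite (X :: rat set) \<Longrightarrow> \<exists>D::int. D > 0 \<and> (\<forall>r\<in>X. \<exists>z::int. of_int D * r = of_int z)"
proof (induction X rule: finite_induct)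
  case empty thus ?case by (intro exI[of _ 1]) auto
next
  case (insert r X)
  then obtain D where D: "D > 0" "\<forall>r\<in>X. \<exists>z::int. of_int D * r = of_int z" by auto
  obtain a b where qr: "quotient_of r = (a, b)" by (cases "quotient_of r") auto
  have b: "b > 0" using quotient_of_denom_pos[OF qr] .
  have rr: "r = of_int a / of_int b" using quotient_of_div[OF qr] .
  have "\<exists>z::int. of_int (D * b) * r' = of_int z" if r': "r' \<in> insert r X" for r'
  proof (cases "r' = r")
    case True
    thus ?thesis using b unfolding rr by (intro exI[of _ "D * a"]) simp
  next
    case False
    then obtain z where "of_int D * r' = of_int z" using D r' by auto
    thus ?thesis by (intro exI[of _ "z * b"]) (simp add: algebra_simps)
  qed
  thus ?case using D b by (intro exI[of _ "D * b"]) simp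
qed

lemma card_independent_le_dim:
  assumes T: "T \<subseteq> W" "V.independent T" and W: "W \<subseteq> V.span C" "finite C"
  shows "card T \<le> V.dim W"
proof -
  obtain BW where BW: "BW \<subseteq> W" "V.independent BW" "W \<subseteq> V.span BW" "card BW = V.dim W"
    by (rule V.basis_exists)
  have "finite BW" using V.independent_span_bound[OF W(2) BW(2)] BW(1) W(1) by auto
  thus ?thesis using V.independent_span_bound[OF _ T(2)] T(1) BW by (metis subset_trans)
qed

context skew_matrix
begin

definition int_vecs :: "(nat \<Rightarrow> int) set" where
  "int_vecs = {v. \<forall>i\<ge>k. v i = 0}"

definition int_kernel :: "(nat \<Rightarrow> int) set" where
  "int_kernel = {x \<in> int_vecs. \<forall>y\<in>int_vecs. (\<Sum>a<k. \<Sum>c<k. x a * y c * S a c) = 0}"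

definition rat_vecs :: "(nat \<Rightarrow> rat) set" where
  "rat_vecs = {v. \<forall>i\<ge>k. v i = 0}"

definition rat_unit :: "nat \<Rightarrow> nat \<Rightarrow> rat" where
  "rat_unit a = (\<lambda>i. if i = a then 1 else 0)"

lemma rat_vecs_span: "rat_vecs = V.span (rat_unit ` {..<k})"
proof
  show "rat_vecs \<subseteq> V.span (rat_unit ` {..<k})"
  proof
    fix f assume f: "f \<in> rat_vecs"
    have "f x = (\<Sum>a<k. qscale (f a) (rat_unit a)) x" for x
    proof -
      have "(\<Sum>a<k. qscale (f a) (rat_unit a)) x = (\<Sum>a<k. (if a = x then f a else 0))"
        unfolding sum_fun_apply by (intro sum.cong refl) (simp add: qscale_apply rat_unit_def)
      thus ?thesis using f unfolding rat_vecs_def by auto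
    qed
    hence "f = (\<Sum>a<k. qscale (f a) (rat_unit a))" by (intro ext)
    moreover have "(\<Sum>a<k. qscale (f a) (rat_unit a)) \<in> V.span (rat_unit ` {..<k})"
      by (intro V.span_sum V.span_scale V.span_base) auto
    ultimately show "f \<in> V.span (rat_unit ` {..<k})" by simp
  qed
  have "V.subspace rat_vecs" unfolding V.subspace_def rat_vecs_def by (auto simp: qscale_apply)
  moreover have "rat_unit ` {..<k} \<subseteq> rat_vecs" unfolding rat_vecs_def rat_unit_def by auto
  ultimately show "V.span (rat_unit ` {..<k}) \<subseteq> rat_vecs" using V.span_minimal by blast
qed

lemma rat_units_independent: "V.independent (rat_unit ` {..<k})"
  unfolding V.dependent_explicit
proof clarify
  fix t u v assume t: "finite t" "t \<subseteq> rat_unit ` {..<k}" and s: "(\<Sum>v\<in>t. qscale (u v) v) = 0"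
    and v: "v \<in> t" "u v \<noteq> 0"
  obtain a where a: "v = rat_unit a" using t v by auto
  have "(\<Sum>w\<in>t. u w * w a) = (\<Sum>w\<in>t. qscale (u w) w) a" by (simp add: sum_fun_apply qscale_apply)
  also have "\<dots> = 0" using s by simp
  finally have "(\<Sum>w\<in>t. u w * w a) = 0" .
  moreover have "(\<Sum>w\<in>t. u w * w a) = (\<Sum>w\<in>{v}. u w * w a)"
  proof (rule sum.mono_neutral_right)
    show "\<forall>w\<in>t - {v}. u w * w a = 0"
    proof
      fix w assume "w \<in> t - {v}"
      then obtain b where "w = rat_unit b" "w \<noteq> v" using t by auto
      thus "u w * w a = 0" using a unfolding rat_unit_def by auto
    qed
  qed (use t v in auto)
  ultimately show False using a v by (simp add: rat_unit_def)
qed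

lemma card_rat_units: "card (rat_unit ` {..<k}) = k"
proof -
  have "inj rat_unit" unfolding inj_def rat_unit_def by (metis one_neq_zero)
  hence "inj_on rat_unit {..<k}" by (rule inj_on_subset) simp
  thus ?thesis by (simp add: card_image)
qed

lemma int_kernel_iff: "x \<in> int_kernel \<longleftrightarrow> x \<in> int_vecs \<and> (\<forall>c<k. (\<Sum>a<k. x a * S a c) = 0)"
proof
  assume x: "x \<in> int_kernel"
  have "(\<Sum>a<k. x a * S a c) = 0" if c: "c < k" for c
  proof -
    define y where "y = (\<lambda>i. if i = c then 1 else (0::int))"
    have "y \<in> int_vecs" unfolding y_def int_vecs_def using c by auto
    hence "(\<Sum>a<k. \<Sum>c'<k. x a * y c' * S a c') = 0" using x unfolding int_kernel_def by auto
    moreover have "(\<Sum>c'<k. x a * y c' * S a c') = x a * S a c" for a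
    proof -
      have "(\<Sum>c'<k. x a * y c' * S a c') = (\<Sum>c'<k. (if c' = c then x a * S a c' else 0))"
        unfolding y_def by (intro sum.cong refl) auto
      thus ?thesis using c by simp
    qed
    ultimately show ?thesis by simp
  qed
  thus "x \<in> int_vecs \<and> (\<forall>c<k. (\<Sum>a<k. x a * S a c) = 0)" using x unfolding int_kernel_def by auto
next
  assume x: "x \<in> int_vecs \<and> (\<forall>c<k. (\<Sum>a<k. x a * S a c) = 0)"
  have "(\<Sum>a<k. \<Sum>c<k. x a * y c * S a c) = (\<Sum>c<k. y c * (\<Sum>a<k. x a * S a c))" for y
    by (subst sum.swap) (simp add: sum_distrib_left algebra_simps)
  thus "x \<in> int_kernel" unfolding int_kernel_def using x by auto
qed

lemma radical_rat_vecs_iff: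
  "v \<in> radical rat_vecs \<longleftrightarrow> v \<in> rat_vecs \<and> (\<forall>c<k. (\<Sum>a<k. v a * of_int (S a c)) = 0)"
proof
  assume v: "v \<in> radical rat_vecs"
  have "(\<Sum>a<k. v a * of_int (S a c)) = 0" if c: "c < k" for c
  proof -
    have "rat_unit c \<in> rat_vecs" unfolding rat_vecs_def rat_unit_def using c by auto
    hence "\<omega> v (rat_unit c) = 0" using v unfolding radical_def by auto
    moreover have "(\<Sum>c'<k. v a * rat_unit c c' * of_int (S a c')) = v a * of_int (S a c)" for a
    proof -
      have "(\<Sum>c'<k. v a * rat_unit c c' * of_int (S a c'))
          = (\<Sum>c'<k. (if c' = c then v a * of_int (S a c') else 0))"
        unfolding rat_unit_def by (intro sum.cong refl) auto
      thus ?thesis using c by simp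
    qed
    ultimately show ?thesis unfolding \<omega>_def by simp
  qed
  thus "v \<in> rat_vecs \<and> (\<forall>c<k. (\<Sum>a<k. v a * of_int (S a c)) = 0)"
    using v unfolding radical_def by auto
next
  assume v: "v \<in> rat_vecs \<and> (\<forall>c<k. (\<Sum>a<k. v a * of_int (S a c)) = 0)"
  have "\<omega> v y = (\<Sum>c<k. y c * (\<Sum>a<k. v a * of_int (S a c)))" for y
    unfolding \<omega>_def by (subst sum.swap) (simp add: sum_distrib_left algebra_simps)
  thus "v \<in> radical rat_vecs" unfolding radical_def using v by auto
qed

lemma of_int_vec_in_radical_iff: "of_int_vec x \<in> radical rat_vecs \<longleftrightarrow> x \<in> int_kernel"
proof -
  have "of_int_vec x \<in> rat_vecs \<longleftrightarrow> x \<in> int_vecs"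
    unfolding of_int_vec_def rat_vecs_def int_vecs_def by auto
  moreover have "(\<Sum>a<k. of_int_vec x a * of_int (S a c)) = (of_int (\<Sum>a<k. x a * S a c) :: rat)" for c
    unfolding of_int_vec_def by simp
  ultimately show ?thesis unfolding radical_rat_vecs_iff int_kernel_iff by (metis of_int_eq_0_iff)
qed

end

lemma inj_of_int_vec: "inj (of_int_vec :: (nat \<Rightarrow> int) \<Rightarrow> nat \<Rightarrow> rat)"
  unfolding inj_def of_int_vec_def by (auto simp: fun_eq_iff)

lemma independent_of_int_vec:
  assumes ind: "int_lin_indep Ss"
  shows "V.independent (of_int_vec ` Ss :: (nat \<Rightarrow> rat) set)"
proof
  assume "V.dependent (of_int_vec ` Ss)"
  then obtain t u v0 where t: "finite t" "t \<subseteq> of_int_vec ` Ss" and s: "(\<Sum>v\<in>t. qscale (u v) v) = 0"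
    and v0: "v0 \<in> t" "u v0 \<noteq> 0" unfolding V.dependent_explicit by blast
  obtain D where D: "D > 0" "\<forall>r\<in>u ` t. \<exists>z::int. of_int D * r = of_int z"
    using exists_common_denominator[of "u ` t"] t by auto
  define cz where "cz v = (SOME z::int. of_int D * u v = of_int z)" for v
  have cz: "of_int (cz v) = of_int D * u v" if "v \<in> t" for v
    unfolding cz_def using D(2) that by (metis (mono_tags, lifting) image_eqI someI_ex)
  define c where "c s = (if of_int_vec s \<in> t then cz (of_int_vec s) else 0)" for s
  define S' where "S' = {s \<in> Ss. of_int_vec s \<in> t}"
  have fin: "finite Ss" using ind unfolding int_lin_indep_def by auto
  have S'S: "S' \<subseteq> Ss" unfolding S'_def by auto
  have QS': "of_int_vec ` S' = t" unfolding S'_def using t(2) by blast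
  have injS': "inj_on (of_int_vec :: _ \<Rightarrow> nat \<Rightarrow> rat) S'" using inj_on_subset[OF inj_of_int_vec subset_UNIV] .
  have "(\<Sum>s\<in>Ss. c s * s i) = 0" for i
  proof -
    have e1: "(\<Sum>s\<in>Ss. c s * s i) = (\<Sum>s\<in>S'. c s * s i)"
      by (rule sum.mono_neutral_right[OF fin S'S]) (auto simp: S'_def c_def)
    have "of_int (\<Sum>s\<in>S'. c s * s i) = (\<Sum>s\<in>S'. of_int D * u (of_int_vec s) * of_int_vec s i)"
      unfolding of_int_sum by (intro sum.cong refl) (auto simp: c_def S'_def cz of_int_vec_def)
    also have "\<dots> = (\<Sum>v\<in>t. of_int D * u v * v i)"
      unfolding QS'[symmetric] by (rule sum.reindex[OF injS', symmetric, unfolded comp_def])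
    also have "\<dots> = of_int D * (\<Sum>v\<in>t. qscale (u v) v) i"
      by (simp add: sum_fun_apply qscale_apply sum_distrib_left mult.assoc)
    also have "\<dots> = 0" using s by simp
    finally have "(of_int (\<Sum>s\<in>S'. c s * s i) :: rat) = 0" .
    thus ?thesis unfolding e1 using of_int_eq_0_iff by blast
  qed
  moreover obtain s0 where s0: "s0 \<in> Ss" "of_int_vec s0 = v0" using v0 t by auto
  ultimately have "c s0 = 0" using ind unfolding int_lin_indep_def by blast
  hence "of_int D * u v0 = 0" using cz[OF v0(1)] s0 v0 unfolding c_def by simp
  thus False using D v0 by simp
qed

lemma inj_on_scaled_independent:
  assumes ind: "V.independent BR"
    and D: "\<And>v. v \<in> BR \<Longrightarrow> D v \<noteq> 0"
    and z: "\<And>v. v \<in> BR \<Longrightarrow> of_int_vec (z v) = qscale (of_int (D v)) v"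
  shows "inj_on z BR"
proof
  fix v w assume v: "v \<in> BR" and w: "w \<in> BR" and e: "z v = z w"
  show "v = w"
  proof (rule ccontr)
    assume vw: "v \<noteq> w"
    have eq: "qscale (of_int (D v)) v = qscale (of_int (D w)) w" using z[OF v] z[OF w] e by simp
    define cf where "cf = (\<lambda>x. if x = v then of_int (D v) else - (of_int (D w) :: rat))"
    have "(\<Sum>x\<in>{v,w}. qscale (cf x) x) = qscale (cf v) v + qscale (cf w) w" using vw by simp
    also have "\<dots> = qscale (of_int (D v)) v + qscale (- of_int (D w)) w" using vw by (simp add: cf_def)
    also have "\<dots> = 0" using eq by (simp add: fun_eq_iff qscale_apply)
    finally have "cf v = 0" using V.independentD[OF ind, of "{v,w}" cf v] v w by simp
    thus False using D[OF v] by (simp add: cf_def)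
  qed
qed

lemma int_lin_indep_scaled_independent:
  assumes ind: "V.independent BR" and fin: "finite BR"
    and D: "\<And>v. v \<in> BR \<Longrightarrow> D v \<noteq> 0"
    and z: "\<And>v. v \<in> BR \<Longrightarrow> of_int_vec (z v) = qscale (of_int (D v)) v"
  shows "int_lin_indep (z ` BR)"
  unfolding int_lin_indep_def
proof (intro conjI allI impI ballI)
  show "finite (z ` BR)" using fin by simp
  fix c s assume z0: "\<forall>i. (\<Sum>s\<in>z ` BR. c s * s i) = 0" and s: "s \<in> z ` BR"
  have "(\<Sum>v\<in>BR. qscale (of_int (c (z v)) * of_int (D v)) v) = 0"
  proof
    fix i
    have "(\<Sum>v\<in>BR. qscale (of_int (c (z v)) * of_int (D v)) v) i
        = (\<Sum>v\<in>BR. of_int (c (z v)) * of_int_vec (z v) i)"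
      by (simp add: sum_fun_apply qscale_apply z mult.assoc)
    also have "\<dots> = of_int (\<Sum>v\<in>BR. c (z v) * z v i)" by (simp add: of_int_vec_def)
    also have "(\<Sum>v\<in>BR. c (z v) * z v i) = (\<Sum>s\<in>z ` BR. c s * s i)"
      by (rule sum.reindex[OF inj_on_scaled_independent[OF ind D z], symmetric, unfolded comp_def])
    finally show "(\<Sum>v\<in>BR. qscale (of_int (c (z v)) * of_int (D v)) v) i = 0 i" using z0 by simp
  qed
  moreover obtain v where v: "v \<in> BR" "s = z v" using s by auto
  ultimately have "of_int (c (z v)) * of_int (D v) = (0::rat)"
    using V.independentD[OF ind fin subset_refl, of "\<lambda>v. of_int (c (z v)) * of_int (D v)" v] by simp
  thus "c s = 0" using D[OF v(1)] v(2) by simp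
qed

context skew_matrix
begin

lemma radical_rat_vecs_subset_span: "radical rat_vecs \<subseteq> V.span (rat_unit ` {..<k})"
  unfolding rat_vecs_span[symmetric] radical_def by auto

lemma card_int_kernel_indep_le:
  assumes "Ss \<subseteq> int_kernel" "int_lin_indep Ss"
  shows "card Ss \<le> V.dim (radical rat_vecs)"
proof -
  have "card (of_int_vec ` Ss :: (nat \<Rightarrow> rat) set) \<le> V.dim (radical rat_vecs)"
    using assms of_int_vec_in_radical_iff independent_of_int_vec radical_rat_vecs_subset_span
    by (intro card_independent_le_dim) auto
  thus ?thesis using card_image[OF inj_on_subset[OF inj_of_int_vec]] by (metis subset_UNIV)
qed

lemma clear_denominators:
  assumes "v \<in> rat_vecs"
  obtains D z where "D > 0" "of_int_vec z = qscale (of_int D) v"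
proof -
  obtain D where D: "D > 0" "\<forall>r\<in>v ` {..<k}. \<exists>z::int. of_int D * r = of_int z"
    using exists_common_denominator[of "v ` {..<k}"] by auto
  have "\<exists>z::int. of_int D * v i = of_int z" for i
    using D(2) assms unfolding rat_vecs_def by (cases "i < k") (auto intro: exI[of _ 0])
  then obtain z where "\<And>i. of_int D * v i = of_int (z i)" by metis
  hence "of_int_vec z = qscale (of_int D) v" unfolding of_int_vec_def qscale_def by auto
  thus ?thesis using that D by blast
qed

lemma exists_int_kernel_indep:
  "\<exists>T. T \<subseteq> int_kernel \<and> int_lin_indep T \<and> card T = V.dim (radical rat_vecs)"
proof -
  obtain BR where BR: "BR \<subseteq> radical rat_vecs" "V.independent BR"
    "radical rat_vecs \<subseteq> V.span BR" "card BR = V.dim (radical rat_vecs)"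
    by (rule V.basis_exists)
  have fin: "finite BR"
    using V.independent_span_bound[OF _ BR(2)] BR(1) radical_rat_vecs_subset_span by auto
  have "\<exists>D z. D > 0 \<and> of_int_vec z = qscale (of_int D) v" if "v \<in> BR" for v
  proof -
    have "v \<in> rat_vecs" using that BR(1) unfolding radical_def by auto
    then obtain D z where "D > 0" "of_int_vec z = qscale (of_int D) v" by (rule clear_denominators)
    thus ?thesis by blast
  qed
  then obtain D z where Dz: "\<And>v. v \<in> BR \<Longrightarrow> D v > 0 \<and> of_int_vec (z v) = qscale (of_int (D v)) v"
    by metis
  have radical_scale: "qscale c v \<in> radical rat_vecs" if "v \<in> radical rat_vecs" for c v
    using that unfolding radical_def rat_vecs_def by (auto simp: qscale_apply \<omega>_scale_left)
  have kernel: "z v \<in> int_kernel" if "v \<in> BR" for v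
  proof -
    have "of_int_vec (z v) \<in> radical rat_vecs" using Dz[OF that] radical_scale BR(1) that by auto
    thus ?thesis using of_int_vec_in_radical_iff by blast
  qed
  have D_nz: "\<And>v. v \<in> BR \<Longrightarrow> D v \<noteq> 0" using Dz by fastforce
  have D_z: "\<And>v. v \<in> BR \<Longrightarrow> of_int_vec (z v) = qscale (of_int (D v)) v" using Dz by blast
  have inj: "inj_on z BR" using inj_on_scaled_independent[OF BR(2) D_nz D_z] .
  have indep: "int_lin_indep (z ` BR)" using int_lin_indep_scaled_independent[OF BR(2) fin D_nz D_z] .
  have "card (z ` BR) = V.dim (radical rat_vecs)" using card_image[OF inj] BR(4) by simp
  thus ?thesis using kernel indep by (intro exI[of _ "z ` BR"]) auto
qed

lemma zrank_int_kernel: "zrank int_kernel = V.dim (radical rat_vecs)"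
  unfolding zrank_def
  by (rule Greatest_equality) (use exists_int_kernel_indep card_int_kernel_indep_le in blast)+

lemma even_sub_zrank_int_kernel: "even (k - zrank int_kernel)"
  using radical_dim_parity[OF finite_imageI[OF finite_lessThan] rat_units_independent]
  unfolding zrank_int_kernel rat_vecs_span card_rat_units by (rule conjunct2)

end

section \<open>Parity of the reduced first Betti number\<close>

lemma dependent_pair_vanishing_coordinate:
  assumes dep: "\<not> int_lin_indep {u, e}" and e: "e i \<noteq> 0" and u: "u i = 0"
  shows "u = vzero"
proof -
  have ue: "u \<noteq> e" using e u by auto
  obtain c where c: "\<forall>k. (\<Sum>s\<in>{u,e}. c s * s k) = 0" and nz: "\<exists>s\<in>{u,e}. c s \<noteq> 0"
    using dep unfolding int_lin_indep_def by auto
  have ck: "c u * u k + c e * e k = 0" for k using c ue by auto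
  have "c e = 0" using ck[of i] e u by simp
  hence "c u \<noteq> 0" using nz by auto
  thus ?thesis using ck \<open>c e = 0\<close> unfolding vzero_def by (auto intro!: ext)
qed

context cohomology_alg
begin

lemma mult11_coordinate_expansion:
  assumes x: "x \<in> D 1" and y: "y \<in> D 1"
  shows "m 1 1 x y i = (\<Sum>a<b 1. \<Sum>c<b 1. x a * y c * m 1 1 (std_basis a) (std_basis c) i)"
proof -
  have add_right: "additive_on (D 1) (\<lambda>y. m 1 1 x' y i)" if "x' \<in> D 1" for x'
    using additive_on_mult_right[of 1 1 x' "\<lambda>v. v i"] additive_on_coordinate that by simp
  have add_left: "additive_on (D 1) (\<lambda>x. m 1 1 x y' i)" if "y' \<in> D 1" for y'
    using additive_on_mult_left[of 1 1 y' "\<lambda>v. v i"] additive_on_coordinate that by simp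
  have "m 1 1 x y i = (\<Sum>c<b 1. y c * m 1 1 x (std_basis c) i)"
    using additive_on_std_basis_expansion[OF add_right[OF x] y] .
  also have "\<dots> = (\<Sum>c<b 1. y c * (\<Sum>a<b 1. x a * m 1 1 (std_basis a) (std_basis c) i))"
    using additive_on_std_basis_expansion[OF add_left[OF deg_part_std_basis] x] by simp
  also have "\<dots> = (\<Sum>a<b 1. \<Sum>c<b 1. x a * y c * m 1 1 (std_basis a) (std_basis c) i)"
    by (subst sum.swap) (simp add: sum_distrib_left algebra_simps)
  finally show ?thesis .
qed

definition T_matrix :: "nat \<Rightarrow> nat \<Rightarrow> nat \<Rightarrow> int" where
  "T_matrix i a c = (if a < b 1 \<and> c < b 1 then m 1 1 (std_basis a) (std_basis c) i else 0)"

lemma skew_matrix_T_matrix: "skew_matrix (T_matrix i)"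
proof
  fix a c
  show "T_matrix i a c = - T_matrix i c a"
    using mult11_anticommute[of "std_basis a" "std_basis c"]
      deg_part_std_basis[of a b 1] deg_part_std_basis[of c b 1]
    unfolding T_matrix_def by (auto simp: vsmult_def)
qed

lemma ker_T_eq_int_kernel:
  assumes detect: "\<And>x y. x \<in> D 1 \<Longrightarrow> y \<in> D 1 \<Longrightarrow> m 1 1 x y = vzero \<longleftrightarrow> m 1 1 x y i = 0"
  shows "ker_T b m = skew_matrix.int_kernel (b 1) (T_matrix i)"
proof -
  interpret skew_matrix "b 1" "T_matrix i" by (rule skew_matrix_T_matrix)
  have expand: "m 1 1 x y i = (\<Sum>a<b 1. \<Sum>c<b 1. x a * y c * T_matrix i a c)"
    if "x \<in> D 1" "y \<in> D 1" for x y
    unfolding mult11_coordinate_expansion[OF that] T_matrix_def by simp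
  have D1: "int_vecs = D 1" unfolding int_vecs_def deg_part_def ..
  show ?thesis
  proof
    show "ker_T b m \<subseteq> int_kernel"
    proof
      fix x assume "x \<in> ker_T b m"
      hence x: "x \<in> D 1" and z: "\<forall>y\<in>D 1. m 1 1 x y = vzero" unfolding ker_T_def by auto
      have "(\<Sum>a<b 1. \<Sum>c<b 1. x a * y c * T_matrix i a c) = 0" if "y \<in> D 1" for y
        using expand[OF x that] z that by (simp add: vzero_def)
      thus "x \<in> int_kernel" unfolding int_kernel_def D1 using x by auto
    qed
    show "int_kernel \<subseteq> ker_T b m"
    proof
      fix x assume "x \<in> int_kernel"
      hence x: "x \<in> D 1" and "\<forall>y\<in>D 1. (\<Sum>a<b 1. \<Sum>c<b 1. x a * y c * T_matrix i a c) = 0"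
        unfolding int_kernel_def D1 by auto
      hence "m 1 1 x y = vzero" if "y \<in> D 1" for y using detect[OF x that] expand[OF x that] that by simp
      thus "x \<in> ker_T b m" unfolding ker_T_def using x by simp
    qed
  qed
qed

end

context bplus_one
begin

lemma product_vanishing_coordinate:
  obtains i where "\<And>x y. x \<in> D 1 \<Longrightarrow> y \<in> D 1 \<Longrightarrow> m 1 1 x y = vzero \<longleftrightarrow> m 1 1 x y i = 0"
proof (cases "\<forall>x\<in>D 1. \<forall>y\<in>D 1. m 1 1 x y = vzero")
  case True
  show ?thesis
  proof (rule that[of 0])
    fix x y assume "x \<in> D 1" "y \<in> D 1"
    thus "m 1 1 x y = vzero \<longleftrightarrow> m 1 1 x y 0 = 0" using True by (auto simp: vzero_def)
  qed
next
  case False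
  then obtain x0 y0 where x0: "x0 \<in> D 1" and y0: "y0 \<in> D 1" and e0: "m 1 1 x0 y0 \<noteq> vzero" by auto
  then obtain i where i: "m 1 1 x0 y0 i \<noteq> 0" unfolding vzero_def by auto
  have vanish: "m 1 1 x y = vzero" if x: "x \<in> D 1" and y: "y \<in> D 1" and z: "m 1 1 x y i = 0" for x y
  proof -
    have "m 1 1 x y \<noteq> m 1 1 x0 y0"
    proof
      assume "m 1 1 x y = m 1 1 x0 y0"
      thus False using z i by simp
    qed
    hence "\<not> int_lin_indep {m 1 1 x y, m 1 1 x0 y0}"
      using I_T_no_indep_pair[OF mult11_in_I_T[OF x y] mult11_in_I_T[OF x0 y0]] by blast
    thus ?thesis using i z by (rule dependent_pair_vanishing_coordinate)
  qed
  show ?thesis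
  proof (rule that[of i])
    fix x y assume "x \<in> D 1" "y \<in> D 1"
    thus "m 1 1 x y = vzero \<longleftrightarrow> m 1 1 x y i = 0" using vanish[of x y] by (auto simp: vzero_def)
  qed
qed

lemma b1_tilde_even: "even (b1_tilde b m)"
proof -
  obtain i where i: "\<And>x y. x \<in> D 1 \<Longrightarrow> y \<in> D 1 \<Longrightarrow> m 1 1 x y = vzero \<longleftrightarrow> m 1 1 x y i = 0"
    using product_vanishing_coordinate by blast
  interpret skew_matrix "b 1" "T_matrix i" by (rule skew_matrix_T_matrix)
  have "ker_T b m = int_kernel" using i by (rule ker_T_eq_int_kernel)
  thus ?thesis unfolding b1_tilde_def using even_sub_zrank_int_kernel by simp
qed

end

theorem mainTheorem3:
  assumes "bplus_one_type b m p"
  shows "zrank (I_T b m) \<le> 1 \<and> even (b1_tilde b m)"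
proof -
  interpret bplus_one b m p
    using assms unfolding bplus_one_type_def by unfold_locales auto
  show ?thesis using zrank_I_T_le_1 b1_tilde_even by simp
qed

end
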